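(* The set of $G\in\mathcal{C}(\mathbb{T}^{\mathbb{N}})$ that are isomorphic (as topological groups) to the universal solenoid is dense in $\mathcal{C}(\mathbb{T}^{\mathbb{N}})$.
   Context: Let $\mathbb{T}=\mathbb{R}/\mathbb{Z}$ with its usual metric $d_{\mathbb{T}}$ (diameter $1/2$), and $\mathbb{T}^{\mathbb{N}}$ with metric $d(x,y)=\sum_{n=0}^\infty 2^{-n}d_{\mathbb{T}}(x(n),y(n))$. $\mathcal{C}(\mathbb{T}^{\mathbb{N}})$ is the set of nonempty compact connected subgroups of $\mathbb{T}^{\mathbb{N}}$ with the Hausdorff metric induced by $d$. The universal solenoid is the inverse limit of $(S_i,f_i)_{i\in\mathbb{N}}$, $S_i=\mathbb{T}$, $f_i(x)=p_ix\pmod 1$, where $(p_i)$ is a sequence of primes in which every prime occurs infinitely many times. *)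

theory Defs
  imports "HOL-Analysis.Analysis" "HOL-Computational_Algebra.Primes"
begin

text \<open>The circle group T = R/Z is represented by the reals in [0,1) (representatives
  via frac); the group operation is addition modulo 1.\<close>

definition tadd :: "real \<Rightarrow> real \<Rightarrow> real" where
  "tadd x y = frac (x + y)"

definition tneg :: "real \<Rightarrow> real" where
  "tneg x = frac (- x)"

definition dT :: "real \<Rightarrow> real \<Rightarrow> real" where
  "dT x y = min (frac (x - y)) (1 - frac (x - y))"

definition TN :: "(nat \<Rightarrow> real) set" where
  "TN = {x. \<forall>n. 0 \<le> x n \<and> x n < 1}"

definition TN_add :: "(nat \<Rightarrow> real) \<Rightarrow> (nat \<Rightarrow> real) \<Rightarrow> (nat \<Rightarrow> real)" where
  "TN_add x y = (\<lambda>n. tadd (x n) (y n))"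

definition TN_neg :: "(nat \<Rightarrow> real) \<Rightarrow> (nat \<Rightarrow> real)" where
  "TN_neg x = (\<lambda>n. tneg (x n))"

definition dTN :: "(nat \<Rightarrow> real) \<Rightarrow> (nat \<Rightarrow> real) \<Rightarrow> real" where
  "dTN x y = (\<Sum>n. dT (x n) (y n) / 2 ^ n)"

definition TN_top :: "(nat \<Rightarrow> real) topology" where
  "TN_top = Metric_space.mtopology TN dTN"

definition cc_subgroup :: "(nat \<Rightarrow> real) set \<Rightarrow> bool" where
  "cc_subgroup G \<longleftrightarrow> G \<noteq> {} \<and> G \<subseteq> TN
     \<and> (\<forall>x\<in>G. \<forall>y\<in>G. TN_add x y \<in> G) \<and> (\<forall>x\<in>G. TN_neg x \<in> G)
     \<and> compactin TN_top G \<and> connectedin TN_top G"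

definition hausd_TN :: "(nat \<Rightarrow> real) set \<Rightarrow> (nat \<Rightarrow> real) set \<Rightarrow> real" where
  "hausd_TN A B = max (SUP a\<in>A. INF b\<in>B. dTN a b) (SUP b\<in>B. INF a\<in>A. dTN a b)"

text \<open>Inverse limit of (S_i, f_i), S_i = T, f_i : S_(i+1) \<rightarrow> S_i, f_i(x) = p_i x mod 1,
  realised as a closed subgroup of T^N (with the subspace topology = inverse limit topology).\<close>
definition solenoid :: "(nat \<Rightarrow> nat) \<Rightarrow> (nat \<Rightarrow> real) set" where
  "solenoid p = {x \<in> TN. \<forall>i. frac (real (p i) * x (Suc i)) = x i}"

definition top_group_iso :: "(nat \<Rightarrow> real) set \<Rightarrow> (nat \<Rightarrow> real) set \<Rightarrow> bool" where
  "top_group_iso G H \<longleftrightarrow> (\<exists>\<phi>. bij_betw \<phi> G H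
     \<and> (\<forall>x\<in>G. \<forall>y\<in>G. \<phi> (TN_add x y) = TN_add (\<phi> x) (\<phi> y))
     \<and> homeomorphic_map (subtopology TN_top G) (subtopology TN_top H) \<phi>)"

end

theory Submission
  imports Defs
begin

text \<open>Only the first N coordinates matter, up to an error 2^-N. The projection K of G to them is
  a compact connected subgroup of the N-torus, hence the image modulo 1 of its Lie algebra W, the
  space of directions w with t w mod 1 in K for all t: connectedness lifts every element of G to
  W, and small elements of K already lie in W. Compactness makes the integer vectors of W cocompact
  in W, and a Kronecker-type argument produces a single integer vector u in W whose closed
  one-parameter subgroup t u mod 1 is close to every point of K. Replacing the first N coordinates
  of the solenoid by s_0 u mod 1 then gives a compact connected subgroup H close to G, and dropping
  these coordinates is an isomorphism of topological groups from H onto the solenoid.\<close>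

section \<open>Circle distance\<close>

lemma dT_le_abs_diff_int: "dT a b \<le> \<bar>a - b - of_int k\<bar>"
proof -
  define x where "x = a - b"
  have fx: "frac x = x - of_int \<lfloor>x\<rfloor>" by (simp add: frac_def)
  have fl: "of_int \<lfloor>x\<rfloor> \<le> x" "x < of_int \<lfloor>x\<rfloor> + 1" by linarith+
  show ?thesis
  proof (cases "k \<le> \<lfloor>x\<rfloor>")
    case True
    then have "real_of_int k \<le> of_int \<lfloor>x\<rfloor>" by simp
    then have "frac x \<le> \<bar>x - of_int k\<bar>" using fx fl by linarith
    then show ?thesis unfolding dT_def x_def by linarith
  next
    case False
    then have "real_of_int k \<ge> of_int \<lfloor>x\<rfloor> + 1" by linarith
    then have "1 - frac x \<le> \<bar>x - of_int k\<bar>" using fx fl by linarith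
    then show ?thesis unfolding dT_def x_def by linarith
  qed
qed

lemma dT_eq_abs_diff_int: "\<exists>k. dT a b = \<bar>a - b - of_int k\<bar>"
proof -
  define x where "x = a - b"
  have fx: "frac x = x - of_int \<lfloor>x\<rfloor>" by (simp add: frac_def)
  have fl: "of_int \<lfloor>x\<rfloor> \<le> x" "x < of_int \<lfloor>x\<rfloor> + 1" by linarith+
  show ?thesis
  proof (cases "frac x \<le> 1 - frac x")
    case True
    then have "dT a b = \<bar>a - b - of_int \<lfloor>x\<rfloor>\<bar>" unfolding dT_def x_def[symmetric]
      using fx fl by auto
    then show ?thesis by blast
  next
    case False
    then have "dT a b = \<bar>a - b - of_int (\<lfloor>x\<rfloor>+1)\<bar>"
      unfolding dT_def x_def[symmetric] using fx fl by auto
    then show ?thesis by blast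
  qed
qed

lemma dT_nonneg: "0 \<le> dT a b"
  using dT_eq_abs_diff_int[of a b] by auto

lemma dT_le_half: "dT a b \<le> 1/2"
  unfolding dT_def by linarith

lemma dT_le_abs_diff: "dT a b \<le> \<bar>a - b\<bar>"
  using dT_le_abs_diff_int[of a b 0] by simp

lemma dT_commute: "dT a b = dT b a"
proof -
  have le: "dT x y \<le> dT y x" for x y
  proof -
    obtain k where "dT y x = \<bar>y - x - of_int k\<bar>" using dT_eq_abs_diff_int by blast
    moreover have "dT x y \<le> \<bar>x - y - of_int (-k)\<bar>" by (rule dT_le_abs_diff_int)
    ultimately show ?thesis by simp
  qed
  show ?thesis using le[of a b] le[of b a] by simp
qed

lemma dT_triangle: "dT a c \<le> dT a b + dT b c"
proof -
  obtain k1 where k1: "dT a b = \<bar>a - b - of_int k1\<bar>" using dT_eq_abs_diff_int by blast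
  obtain k2 where k2: "dT b c = \<bar>b - c - of_int k2\<bar>" using dT_eq_abs_diff_int by blast
  have "dT a c \<le> \<bar>a - c - of_int (k1+k2)\<bar>" by (rule dT_le_abs_diff_int)
  also have "\<dots> \<le> \<bar>a - b - of_int k1\<bar> + \<bar>b - c - of_int k2\<bar>" by simp
  finally show ?thesis using k1 k2 by simp
qed

lemma dT_add_le: "dT (a + c) (b + e) \<le> dT a b + dT c e"
proof -
  obtain k1 where k1: "dT a b = \<bar>a - b - of_int k1\<bar>" using dT_eq_abs_diff_int by blast
  obtain k2 where k2: "dT c e = \<bar>c - e - of_int k2\<bar>" using dT_eq_abs_diff_int by blast
  have "dT (a+c) (b+e) \<le> \<bar>(a+c) - (b+e) - of_int (k1+k2)\<bar>" by (rule dT_le_abs_diff_int)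
  also have "\<dots> \<le> \<bar>a - b - of_int k1\<bar> + \<bar>c - e - of_int k2\<bar>" by simp
  finally show ?thesis using k1 k2 by simp
qed

lemma dT_mult_int_le: "dT (of_int m * a) (of_int m * b) \<le> \<bar>of_int m\<bar> * dT a b"
proof -
  obtain k where k: "dT a b = \<bar>a - b - of_int k\<bar>" using dT_eq_abs_diff_int by blast
  have "dT (of_int m * a) (of_int m * b) \<le> \<bar>of_int m * a - of_int m * b - of_int (m*k)\<bar>"
    by (rule dT_le_abs_diff_int)
  also have "\<dots> = \<bar>of_int m\<bar> * \<bar>a - b - of_int k\<bar>"
    by (simp add: abs_mult[symmetric] algebra_simps)
  finally show ?thesis using k by simp
qed

lemma dT_eq_if_diff_eq:
  assumes "a - b = c - e + of_int k"
  shows "dT a b = dT c e"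
proof -
  have le: "dT a b \<le> dT c e" if "a - b = c - e + of_int k" for a b c e k
  proof -
    obtain j where j: "dT c e = \<bar>c - e - of_int j\<bar>" using dT_eq_abs_diff_int by blast
    have "dT a b \<le> \<bar>a - b - of_int (k + j)\<bar>" by (rule dT_le_abs_diff_int)
    then show ?thesis using j that by simp
  qed
  have "c - e = a - b + of_int (- k)" using assms by simp
  then show ?thesis using le[OF assms] le[of c e a b "- k"] by simp
qed

lemma dT_frac_left [simp]: "dT (frac a) b = dT a b"
  by (rule dT_eq_if_diff_eq[of _ _ _ _ "- \<lfloor>a\<rfloor>"]) (simp add: frac_def)

lemma dT_frac_right [simp]: "dT a (frac b) = dT a b"
  by (rule dT_eq_if_diff_eq[of _ _ _ _ "\<lfloor>b\<rfloor>"]) (simp add: frac_def)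

lemma dT_eq_0_if_diff_int: "a - b = of_int k \<Longrightarrow> dT a b = 0"
  using dT_le_abs_diff_int[of a b k] dT_nonneg[of a b] by simp

lemma dT_self [simp]: "dT a a = 0"
  using dT_eq_0_if_diff_int[of a a 0] by simp

lemma dT_eq_0_imp_eq: "0 \<le> a \<Longrightarrow> a < 1 \<Longrightarrow> 0 \<le> b \<Longrightarrow> b < 1 \<Longrightarrow> dT a b = 0 \<Longrightarrow> a = b"
proof -
  assume h: "0 \<le> a" "a < 1" "0 \<le> b" "b < 1" "dT a b = 0"
  obtain k where k: "dT a b = \<bar>a - b - of_int k\<bar>" using dT_eq_abs_diff_int by blast
  then have "a - b = of_int k" using h by simp
  moreover have "-1 < a - b" "a - b < 1" using h by auto
  ultimately have "real_of_int k < 1" "real_of_int k > -1" by auto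
  then have "k < 1" "k > -1" by linarith+
  then have "k = 0" by simp
  then show "a = b" using \<open>a - b = of_int k\<close> by simp
qed

lemma frac_eq_iff_dT_eq_0: "frac a = frac b \<longleftrightarrow> dT a b = 0"
proof
  assume "frac a = frac b"
  then have "a - b = of_int (\<lfloor>a\<rfloor> - \<lfloor>b\<rfloor>)" by (simp add: frac_def)
  then show "dT a b = 0" by (rule dT_eq_0_if_diff_int)
next
  assume "dT a b = 0"
  then show "frac a = frac b"
    using dT_eq_0_imp_eq[of "frac a" "frac b"] by (simp add: frac_lt_1)
qed

section \<open>The product metric\<close>

lemma dTN_term_le:
  fixes x y :: "nat \<Rightarrow> real"
  shows "dT (x n) (y n) / 2^n \<le> (1/2) * (1/2)^n"
proof -
  have "dT (x n) (y n) / 2^n \<le> (1/2) / 2^n"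
    by (rule divide_right_mono) (use dT_le_half[of "x n" "y n"] in auto)
  then show ?thesis by (simp add: power_one_over)
qed

lemma dTN_term_nonneg:
  fixes x y :: "nat \<Rightarrow> real"
  shows "0 \<le> dT (x n) (y n) / 2^n"
  by (simp add: dT_nonneg)

lemma summable_dTN:
  fixes x y :: "nat \<Rightarrow> real"
  shows "summable (\<lambda>n. dT (x n) (y n) / 2^n)"
proof (rule summable_comparison_test'[where N=0])
  show "summable (\<lambda>n. (1/2) * (1/2::real)^n)"
    by (intro summable_mult summable_geometric) simp
  show "norm (dT (x n) (y n) / 2^n) \<le> (1/2) * (1/2)^n" for n
    using dTN_term_le[of x n y] dTN_term_nonneg[of x n y] by simp
qed

lemma dTN_nonneg: "0 \<le> dTN x y"
  unfolding dTN_def by (intro suminf_nonneg summable_dTN dTN_term_nonneg)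

lemma dTN_sym: "dTN x y = dTN y x"
  unfolding dTN_def by (simp add: dT_commute)

lemma dTN_triangle: "dTN x z \<le> dTN x y + dTN y z"
proof -
  have "dTN x y + dTN y z = (\<Sum>n. dT (x n) (y n) / 2^n + dT (y n) (z n) / 2^n)"
    unfolding dTN_def by (intro suminf_add summable_dTN)
  moreover have "dTN x z \<le> (\<Sum>n. dT (x n) (y n) / 2^n + dT (y n) (z n) / 2^n)"
    unfolding dTN_def
  proof (rule suminf_le)
    show "dT (x n) (z n) / 2 ^ n \<le> dT (x n) (y n) / 2 ^ n + dT (y n) (z n) / 2 ^ n" for n
      using dT_triangle[of "x n" "z n" "y n"]
        by (simp add: add_divide_distrib[symmetric] divide_right_mono)
  qed (intro summable_dTN summable_add)+
  ultimately show ?thesis by simp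
qed

lemma dT_le_dTN:
  fixes x y :: "nat \<Rightarrow> real"
  shows "dT (x n) (y n) \<le> 2^n * dTN x y"
proof -
  have "dT (x n) (y n) / 2^n \<le> dTN x y"
    unfolding dTN_def using sum_le_suminf[OF summable_dTN, of "{n}"] dTN_term_nonneg by auto
  then show ?thesis by (simp add: field_simps)
qed

lemma dT_le_dTN_if_le:
  assumes "n \<le> N"
  shows "dT (x n) (y n) \<le> 2^N * dTN x y"
proof -
  have "(2::real)^n * dTN x y \<le> 2^N * dTN x y"
    using assms by (intro mult_right_mono dTN_nonneg power_increasing) auto
  then show ?thesis using dT_le_dTN[of x n y] by linarith
qed

lemma sum_dT_le_dTN: "(\<Sum>n<N. dT (x n) (y n)) \<le> real N * 2^N * dTN x y"
proof -
  have "(\<Sum>n<N. dT (x n) (y n)) \<le> (\<Sum>n<N. 2^N * dTN x y)"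
    by (intro sum_mono dT_le_dTN_if_le) simp
  then show ?thesis by simp
qed

lemma dT_lt_if_dTN_lt:
  assumes "n \<le> N" "dTN x y < r / 2^N"
  shows "dT (x n) (y n) < r"
  using dT_le_dTN_if_le[OF assms(1), of x y] assms(2) by (simp add: field_simps)

lemma dTN_eq_0_imp_eq: "x \<in> TN \<Longrightarrow> y \<in> TN \<Longrightarrow> dTN x y = 0 \<Longrightarrow> x = y"
proof
  fix n assume h: "x \<in> TN" "y \<in> TN" "dTN x y = 0"
  have "dT (x n) (y n) = 0" using dT_le_dTN[of x n y] h(3) dT_nonneg[of "x n" "y n"] by simp
  then show "x n = y n" using h(1,2) dT_eq_0_imp_eq[of "x n" "y n"] by (auto simp: TN_def)
qed

lemma dTN_self [simp]: "dTN x x = 0"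
  by (simp add: dTN_def)

lemma Metric_space_TN: "Metric_space TN dTN"
  by (unfold_locales) (auto simp: dTN_nonneg dTN_sym dTN_triangle dTN_eq_0_imp_eq)

interpretation TNM: Metric_space TN dTN by (rule Metric_space_TN)

lemma dTN_tail_le:
  fixes x y :: "nat \<Rightarrow> real"
  shows "(\<Sum>n. dT (x (n+M)) (y (n+M)) / 2^(n+M)) \<le> (1/2)^M"
proof -
  have s: "summable (\<lambda>n. dT (x (n+M)) (y (n+M)) / 2^(n+M))"
    using summable_dTN[of x y] by (subst summable_iff_shift) 
  have g: "(\<lambda>n. ((1/2)^M/2) * (1/2::real)^n) sums (((1/2)^M/2) * (1 / (1 - 1/2)))"
    by (intro sums_mult geometric_sums) simp
  have "(\<Sum>n. dT (x (n+M)) (y (n+M)) / 2^(n+M)) \<le> (\<Sum>n. ((1/2)^M/2) * (1/2::real)^n)"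
  proof (rule suminf_le[OF _ s])
    show "dT (x (n+M)) (y (n+M)) / 2^(n+M) \<le> ((1/2)^M/2) * (1/2::real)^n" for n
      using dTN_term_le[of x "n+M" y]
      by (simp add: power_add power_one_over mult_ac)
    show "summable (\<lambda>n. ((1/2)^M/2) * (1/2::real)^n)" using g by (rule sums_summable)
  qed
  also have "\<dots> = (1/2)^M" using sums_unique[OF g] by simp
  finally show ?thesis .
qed

lemma dTN_split:
  fixes x y :: "nat \<Rightarrow> real"
  shows "dTN x y = (\<Sum>n<M. dT (x n) (y n) / 2^n) + (\<Sum>n. dT (x (n+M)) (y (n+M)) / 2^(n+M))"
  unfolding dTN_def using suminf_split_initial_segment[OF summable_dTN, of x y M] by simp

lemma dTN_le_weighted_prefix_sum:
  fixes x y :: "nat \<Rightarrow> real"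
  shows "dTN x y \<le> (\<Sum>n<M. dT (x n) (y n) / 2^n) + (1/2)^M"
  using dTN_split[of x y M] dTN_tail_le[of x M y] by simp

lemma dTN_le_prefix_sum:
  fixes x y :: "nat \<Rightarrow> real"
  shows "dTN x y \<le> (\<Sum>n<M. dT (x n) (y n)) + (1/2)^M"
proof -
  have "(\<Sum>n<M. dT (x n) (y n) / 2^n) \<le> (\<Sum>n<M. dT (x n) (y n))"
  proof (rule sum_mono)
    fix n show "dT (x n) (y n) / 2^n \<le> dT (x n) (y n)"
      using dT_nonneg[of "x n" "y n"] mult_left_mono[of 1 "2^n" "dT (x n) (y n)"]
      by (simp add: divide_le_eq)
  qed
  then show ?thesis using dTN_le_weighted_prefix_sum[of x y M] by simp
qed

lemma dTN_tail_eq: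
  fixes x y :: "nat \<Rightarrow> real"
  shows "(\<Sum>n. dT (x (n+M)) (y (n+M)) / 2^(n+M)) = (1/2)^M * dTN (\<lambda>n. x (n+M)) (\<lambda>n. y (n+M))"
  unfolding dTN_def
  by (subst suminf_mult[OF summable_dTN, symmetric]) (simp add: power_add power_one_over mult_ac)

lemma dTN_drop_le:
  fixes x y :: "nat \<Rightarrow> real"
  shows "dTN (\<lambda>n. x (n+M)) (\<lambda>n. y (n+M)) \<le> 2^M * dTN x y"
proof -
  have "0 \<le> (\<Sum>n<M. dT (x n) (y n) / 2^n)" by (intro sum_nonneg dTN_term_nonneg)
  then have "(1/2)^M * dTN (\<lambda>n. x (n+M)) (\<lambda>n. y (n+M)) \<le> dTN x y"
    using dTN_split[of x y M] dTN_tail_eq[of x M y] by simp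
  then show ?thesis by (simp add: power_one_over field_simps)
qed

section \<open>Topology of the infinite torus\<close>

lemma half_power_less: "(e::real) > 0 \<Longrightarrow> \<exists>M. (1/2::real)^M < e"
  by (rule real_arch_pow_inv) auto

lemma subtopology_TN_top: "S \<subseteq> TN \<Longrightarrow> subtopology TN_top S = Metric_space.mtopology S dTN"
proof -
  assume "S \<subseteq> TN"
  then interpret Submetric TN dTN S by unfold_locales
  show ?thesis using mtopology_submetric by (simp add: TN_top_def)
qed

lemma Metric_space_subset_TN: "S \<subseteq> TN \<Longrightarrow> Metric_space S dTN"
  using TNM.subspace by blast

lemma continuous_map_if_Lipschitz:
  assumes "S \<subseteq> TN" "T \<subseteq> TN" "f ` S \<subseteq> T"
    and L: "\<And>x y. x \<in> S \<Longrightarrow> y \<in> S \<Longrightarrow> dTN (f x) (f y) \<le> C * dTN x y"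
  shows "continuous_map (subtopology TN_top S) (subtopology TN_top T) f"
proof -
  interpret MS: Metric_space S dTN using assms(1) by (rule Metric_space_subset_TN)
  have "continuous_map MS.mtopology (Metric_space.mtopology T dTN) f"
    unfolding MS.metric_continuous_map[OF Metric_space_subset_TN[OF assms(2)]]
  proof (intro conjI ballI allI impI assms(3))
    fix a and e :: real assume "a \<in> S" "0 < e"
    show "\<exists>\<delta>>0. \<forall>x. x \<in> S \<and> dTN a x < \<delta> \<longrightarrow> dTN (f a) (f x) < e"
    proof (intro exI[of _ "e / (\<bar>C\<bar> + 1)"] conjI allI impI)
      show "0 < e / (\<bar>C\<bar> + 1)" using \<open>0 < e\<close> by simp
      fix x assume x: "x \<in> S \<and> dTN a x < e / (\<bar>C\<bar> + 1)"
      have "dTN (f a) (f x) \<le> C * dTN a x" using L \<open>a \<in> S\<close> x by blast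
      also have "\<dots> \<le> \<bar>C\<bar> * dTN a x" using dTN_nonneg[of a x]
        by (simp add: mult_right_mono)
      also have "\<dots> \<le> (\<bar>C\<bar> + 1) * dTN a x" using dTN_nonneg[of a x]
        by (simp add: mult_right_mono)
      also have "\<dots> < (\<bar>C\<bar> + 1) * (e / (\<bar>C\<bar> + 1))"
        using x by (intro mult_strict_left_mono) auto
      also have "\<dots> = e" by simp
      finally show "dTN (f a) (f x) < e" .
    qed
  qed
  then show ?thesis using subtopology_TN_top assms(1,2) by simp
qed

lemma continuous_map_real_if_Lipschitz:
  assumes "range f \<subseteq> TN"
    and L: "\<And>x y. dTN (f x) (f y) \<le> C * \<bar>x - y\<bar>"
  shows "continuous_map euclideanreal TN_top f"
proof -
  have "continuous_map Met_TC.mtopology TNM.mtopology f"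
    unfolding Met_TC.metric_continuous_map[OF Metric_space_TN]
  proof (intro conjI ballI allI impI)
    show "f ` UNIV \<subseteq> TN" using assms(1) by simp
    fix a and e :: real assume "0 < e"
    show "\<exists>\<delta>>0. \<forall>x. x \<in> UNIV \<and> dist a x < \<delta> \<longrightarrow> dTN (f a) (f x) < e"
    proof (intro exI[of _ "e / (\<bar>C\<bar> + 1)"] conjI allI impI)
      show "0 < e / (\<bar>C\<bar> + 1)" using \<open>0 < e\<close> by simp
      fix x assume x: "x \<in> UNIV \<and> dist a x < e / (\<bar>C\<bar> + 1)"
      have "dTN (f a) (f x) \<le> C * \<bar>a - x\<bar>" using L by blast
      also have "\<dots> \<le> (\<bar>C\<bar> + 1) * \<bar>a - x\<bar>" by (simp add: mult_right_mono)
      also have "\<dots> < (\<bar>C\<bar> + 1) * (e / (\<bar>C\<bar> + 1))"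
        using x by (intro mult_strict_left_mono) (auto simp: dist_real_def)
      also have "\<dots> = e" by simp
      finally show "dTN (f a) (f x) < e" .
    qed
  qed
  then show ?thesis by (simp add: TN_top_def)
qed

lemma frac_in_TN [simp]: "(\<lambda>n. frac (x n)) \<in> TN"
  by (simp add: TN_def frac_lt_1)

lemma continuous_map_frac_coords:
  "continuous_map (product_topology (\<lambda>_. top_of_set {0..1}) UNIV) TN_top (\<lambda>x n. frac (x n))"
  (is "continuous_map ?P _ ?F")
  unfolding TN_top_def TNM.continuous_map_to_metric
proof (intro ballI allI impI)
  fix x and e :: real assume x: "x \<in> topspace ?P" and e: "0 < e"
  obtain M where M: "(1/2::real)^M < e/2" using half_power_less[of "e/2"] e by auto
  define U where "U = {y \<in> topspace ?P. (\<Sum>n<M. \<bar>y n - x n\<bar>) \<in> {..<e/2}}"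
  have "continuous_map ?P euclideanreal (\<lambda>y. y n)" for n
    by (rule continuous_map_into_fulltopology, rule continuous_map_product_projection) simp
  then have "continuous_map ?P euclideanreal (\<lambda>y. \<Sum>n<M. \<bar>y n - x n\<bar>)"
    by (intro continuous_map_sum continuous_map_real_abs continuous_map_diff) auto
  then have "openin ?P U" unfolding U_def
    by (rule openin_continuous_map_preimage) simp
  moreover have "x \<in> U" using x e by (simp add: U_def)
  moreover have "?F y \<in> TNM.mball (?F x) e" if "y \<in> U" for y
  proof -
    have "dTN (?F x) (?F y) \<le> (\<Sum>n<M. dT (?F x n) (?F y n)) + (1/2)^M"
      by (rule dTN_le_prefix_sum)
    also have "(\<Sum>n<M. dT (?F x n) (?F y n)) \<le> (\<Sum>n<M. \<bar>y n - x n\<bar>)"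
      by (intro sum_mono) (simp add: dT_le_abs_diff[THEN order_trans] abs_minus_commute)
    finally have "dTN (?F x) (?F y) < e" using that M by (simp add: U_def)
    then show ?thesis by simp
  qed
  ultimately show "\<exists>U. openin ?P U \<and> x \<in> U \<and> (\<forall>y\<in>U. ?F y \<in> TNM.mball (?F x) e)"
    by blast
qed

lemma compact_space_TN_top: "compact_space TN_top"
proof -
  define P where "P = product_topology (\<lambda>_::nat. top_of_set {0..1::real}) UNIV"
  have "compact_space P"
    unfolding P_def compact_space_product_topology by (auto intro: compact_space_subtopology)
  then have "compactin TN_top ((\<lambda>x n. frac (x n)) ` topspace P)"
    using image_compactin continuous_map_frac_coords unfolding P_def compact_space_def by blast
  moreover have "(\<lambda>x n. frac (x n)) ` topspace P = TN"
  proof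
    show "(\<lambda>x n. frac (x n)) ` topspace P \<subseteq> TN" by auto
    show "TN \<subseteq> (\<lambda>x n. frac (x n)) ` topspace P"
    proof
      fix x assume "x \<in> TN"
      then have "x \<in> topspace P" "(\<lambda>n. frac (x n)) = x"
        by (auto simp: P_def TN_def frac_eq less_imp_le)
      then show "x \<in> (\<lambda>x n. frac (x n)) ` topspace P" by (metis image_eqI)
    qed
  qed
  ultimately show ?thesis by (simp add: compact_space_def TN_top_def)
qed

lemma closedin_imp_compactin_TN: "closedin TN_top S \<Longrightarrow> compactin TN_top S"
  using compact_space_TN_top closedin_subset by (metis closed_compactin compact_space_def)

lemma frac_eq_if_diff_int:
  fixes a b :: real
  shows "a - b = of_int k \<Longrightarrow> frac a = frac b"
  using frac_eq_iff_dT_eq_0 dT_eq_0_if_diff_int by blast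

lemma diff_Ints_if_frac_eq:
  fixes a b :: real
  shows "frac a = frac b \<Longrightarrow> a - b \<in> \<int>"
proof -
  assume "frac a = frac b"
  then have "a - b = of_int (\<lfloor>a\<rfloor> - \<lfloor>b\<rfloor>)" by (simp add: frac_def)
  then show ?thesis by simp
qed

lemma frac_add_frac_left:
  fixes a b :: real
  shows "frac (frac a + b) = frac (a + b)"
  by (rule frac_eq_if_diff_int[of _ _ "- \<lfloor>a\<rfloor>"]) (simp add: frac_def)

lemma frac_add_frac_right:
  fixes a b :: real
  shows "frac (a + frac b) = frac (a + b)"
  by (rule frac_eq_if_diff_int[of _ _ "- \<lfloor>b\<rfloor>"]) (simp add: frac_def)

lemma frac_mult_frac_int:
  fixes x :: real
  shows "frac (of_int k * frac x) = frac (of_int k * x)"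
  by (rule frac_eq_if_diff_int[of _ _ "- k * \<lfloor>x\<rfloor>"]) (simp add: frac_def algebra_simps)

lemma frac_mult_frac_nat: "frac (real m * frac x) = frac (real m * x)"
  using frac_mult_frac_int[of "int m" x] by simp

lemma frac_frac_mult_int:
  fixes x c :: real
  shows "c \<in> \<int> \<Longrightarrow> frac (frac x * c) = frac (x * c)"
proof -
  assume "c \<in> \<int>"
  then obtain k where k: "c = of_int k" by (rule Ints_cases)
  show ?thesis using frac_mult_frac_int[of k x] by (simp add: k mult.commute)
qed

lemma frac_neg_frac:
  fixes a :: real
  shows "frac (- frac a) = frac (- a)"
  by (rule frac_eq_if_diff_int[of _ _ "\<lfloor>a\<rfloor>"]) (simp add: frac_def)

lemma tadd_frac: "tadd (frac a) (frac b) = frac (a + b)"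
  by (simp add: tadd_def frac_add_frac_left frac_add_frac_right)

lemma tneg_frac: "tneg (frac a) = frac (- a)"
  by (simp add: tneg_def frac_neg_frac)

lemma frac_TN_coord: "x \<in> TN \<Longrightarrow> frac (x n) = x n"
  by (simp add: TN_def frac_eq less_imp_le)

section \<open>The solenoid\<close>

definition prefix_prod :: "(nat \<Rightarrow> nat) \<Rightarrow> nat \<Rightarrow> nat" where
  "prefix_prod p i = (\<Prod>j\<in>{0..<i}. p j)"

definition sol_line :: "(nat \<Rightarrow> nat) \<Rightarrow> real \<Rightarrow> nat \<Rightarrow> real" where
  "sol_line p t = (\<lambda>i. frac (t / real (prefix_prod p i)))"

lemma prefix_prod_pos: "\<forall>i. p i > 0 \<Longrightarrow> prefix_prod p i > 0"
  by (simp add: prefix_prod_def)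

lemma prefix_prod_split: "i \<le> M \<Longrightarrow> prefix_prod p M = prefix_prod p i * (\<Prod>j\<in>{i..<M}. p j)"
  unfolding prefix_prod_def by (simp add: prod.atLeastLessThan_concat)

lemma prefix_prod_Suc: "prefix_prod p (Suc i) = prefix_prod p i * p i"
  by (simp add: prefix_prod_def)

lemma sol_line_in_TN [simp]: "sol_line p t \<in> TN"
  by (simp add: sol_line_def TN_def frac_lt_1)

lemma sol_line_0 [simp]: "sol_line p t 0 = frac t"
  by (simp add: sol_line_def prefix_prod_def)

lemma sol_line_in_solenoid:
  assumes "\<forall>i. p i > 0"
  shows "sol_line p t \<in> solenoid p"
proof -
  have "frac (real (p i) * sol_line p t (Suc i)) = sol_line p t i" for i
  proof -
    have "frac (real (p i) * sol_line p t (Suc i)) = frac (real (p i) * (t / real (prefix_prod p (Suc i))))"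
      by (simp add: sol_line_def frac_mult_frac_nat)
    also have "real (p i) * (t / real (prefix_prod p (Suc i))) = t / real (prefix_prod p i)"
      using assms prefix_prod_pos[OF assms, of i] by (simp add: prefix_prod_Suc field_simps)
    finally show ?thesis by (simp add: sol_line_def)
  qed
  then show ?thesis by (simp add: solenoid_def)
qed

lemma solenoid_subset_TN: "solenoid p \<subseteq> TN"
  by (auto simp: solenoid_def)

lemma solenoid_coord_eq:
  assumes "s \<in> solenoid p"
  shows "s i = frac (real (\<Prod>j\<in>{i..<i+d}. p j) * s (i+d))"
proof (induction d)
  case 0
  then show ?case using assms by (simp add: solenoid_def frac_TN_coord)
next
  case (Suc d)
  have e: "s (i+d) = frac (real (p (i+d)) * s (Suc (i+d)))"
    using assms by (simp add: solenoid_def)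
  have "s i = frac (real (\<Prod>j\<in>{i..<i+d}. p j) * s (i+d))" by (rule Suc.IH)
  also have "\<dots> = frac (real (\<Prod>j\<in>{i..<i+d}. p j) * frac (real (p (i+d)) * s (Suc (i+d))))"
    by (simp only: e)
  also have "\<dots> = frac (real (\<Prod>j\<in>{i..<i+d}. p j) * (real (p (i+d)) * s (Suc (i+d))))"
    by (rule frac_mult_frac_nat)
  also have "real (\<Prod>j\<in>{i..<i+d}. p j) * (real (p (i+d)) * s (Suc (i+d)))
      = real (\<Prod>j\<in>{i..<i + Suc d}. p j) * s (i + Suc d)"
    by (simp add: prod.atLeastLessThan_Suc)
  finally show ?case .
qed

lemma sol_line_Lipschitz:
  assumes "\<forall>i. p i > 0"
  shows "dTN (sol_line p a) (sol_line p b) \<le> 2 * \<bar>a - b\<bar>"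
proof -
  have g: "(\<lambda>n. \<bar>a - b\<bar> * (1/2::real)^n) sums (\<bar>a - b\<bar> * (1 / (1 - 1/2)))"
    by (intro sums_mult geometric_sums) simp
  have "dTN (sol_line p a) (sol_line p b) \<le> (\<Sum>n. \<bar>a - b\<bar> * (1/2::real)^n)"
    unfolding dTN_def
  proof (rule suminf_le)
    fix n
    have P1: "real (prefix_prod p n) \<ge> 1" using prefix_prod_pos[OF assms, of n] by simp
    have "dT (sol_line p a n) (sol_line p b n) \<le> \<bar>a / real (prefix_prod p n) - b / real (prefix_prod p n)\<bar>"
      by (simp add: sol_line_def dT_le_abs_diff)
    also have "\<dots> = \<bar>a - b\<bar> / real (prefix_prod p n)" using P1
      by (simp add: diff_divide_distrib[symmetric])
    also have "\<dots> \<le> \<bar>a - b\<bar>" using P1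
      by (simp add: divide_le_eq mult_le_cancel_left1 mult_left_mono[of 1, simplified])
    finally have "dT (sol_line p a n) (sol_line p b n) \<le> \<bar>a - b\<bar>" .
    then show "dT (sol_line p a n) (sol_line p b n) / 2 ^ n \<le> \<bar>a - b\<bar> * (1/2)^n"
      by (simp add: power_one_over divide_right_mono)
  qed (use summable_dTN g sums_summable in auto)
  also have "\<dots> = 2 * \<bar>a - b\<bar>" using sums_unique[OF g] by simp
  finally show ?thesis .
qed

lemma continuous_map_sol_line: "\<forall>i. p i > 0 \<Longrightarrow> continuous_map euclideanreal TN_top (sol_line p)"
  by (rule continuous_map_real_if_Lipschitz[where C=2]) (auto intro: sol_line_Lipschitz)

lemma dT_coord_defect_le:
  fixes c :: nat
  shows "dT (real c * x (Suc i)) (x i)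
    \<le> dT (real c * y (Suc i)) (y i) + (real c * 2^Suc i + 2^i) * dTN x y"
proof -
  have "dT (real c * x (Suc i)) (real c * y (Suc i)) \<le> real c * dT (x (Suc i)) (y (Suc i))"
    using dT_mult_int_le[of "int c" "x (Suc i)" "y (Suc i)"] by simp
  also have "\<dots> \<le> real c * (2^Suc i * dTN x y)" by (intro mult_left_mono dT_le_dTN) simp
  finally have "dT (real c * x (Suc i)) (real c * y (Suc i)) \<le> real c * 2^Suc i * dTN x y" by simp
  moreover have "dT (y i) (x i) \<le> 2^i * dTN x y" using dT_le_dTN[of x i y] by (simp add: dT_commute)
  moreover have "dT (real c * x (Suc i)) (x i) \<le> dT (real c * x (Suc i)) (real c * y (Suc i))
      + dT (real c * y (Suc i)) (y i) + dT (y i) (x i)"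
    using dT_triangle[of "real c * x (Suc i)" "x i" "real c * y (Suc i)"]
      dT_triangle[of "real c * y (Suc i)" "x i" "y i"] by linarith
  ultimately show ?thesis by (simp add: algebra_simps)
qed

lemma closedin_solenoid: "closedin TN_top (solenoid p)"
  unfolding TN_top_def TNM.closedin_metric
proof (intro conjI allI impI solenoid_subset_TN)
  fix x assume x: "x \<in> TN - solenoid p"
  then obtain i where i: "frac (real (p i) * x (Suc i)) \<noteq> x i"
    by (auto simp: solenoid_def)
  define eta where "eta = dT (real (p i) * x (Suc i)) (x i)"
  define C :: real where "C = real (p i) * 2^Suc i + 2^i"
  have "eta \<noteq> 0" using i frac_eq_iff_dT_eq_0[of "real (p i) * x (Suc i)" "x i"] x
    by (auto simp: eta_def frac_TN_coord)
  then have "eta > 0" using dT_nonneg by (simp add: eta_def order_less_le)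
  moreover have "C > 0" by (simp add: C_def add_nonneg_pos)
  moreover have "eta \<le> C * dTN x y" if "y \<in> solenoid p" for y
  proof -
    have "dT (real (p i) * y (Suc i)) (y i) = 0"
      using that frac_eq_iff_dT_eq_0[of "real (p i) * y (Suc i)" "y i"] frac_TN_coord[of y i]
      by (simp add: solenoid_def)
    then show ?thesis using dT_coord_defect_le[of "p i" x i y] by (simp add: eta_def C_def)
  qed
  ultimately show "\<exists>r>0. disjnt (solenoid p) (TNM.mball x r)"
    by (intro exI[of _ "eta / C"]) (force simp: disjnt_iff field_simps dTN_sym)
qed

lemma solenoid_eq_closure_sol_line:
  assumes "\<forall>i. p i > 0"
  shows "solenoid p = TN_top closure_of (range (sol_line p))"
proof
  have "range (sol_line p) \<subseteq> solenoid p" using sol_line_in_solenoid[OF assms] by auto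
  then show "TN_top closure_of (range (sol_line p)) \<subseteq> solenoid p"
    using closedin_solenoid by (simp add: closure_of_minimal)
  show "solenoid p \<subseteq> TN_top closure_of (range (sol_line p))"
    unfolding TN_top_def TNM.metric_closure_of
  proof (intro subsetI CollectI conjI allI impI)
    fix s assume s: "s \<in> solenoid p"
    then show "s \<in> TN" using solenoid_subset_TN by auto
    fix r :: real assume "r > 0"
    then obtain M where M: "(1/2::real)^M < r" using half_power_less by blast
    define t where "t = real (prefix_prod p M) * s M"
    have eq: "sol_line p t i = s i" if "i < M" for i
    proof -
      obtain d where d: "M = i + d" using \<open>i < M\<close> by (metis less_imp_add_positive)
      have "t / real (prefix_prod p i) = real (\<Prod>j\<in>{i..<i+d}. p j) * s (i+d)"
        using prefix_prod_split[of i M p] d prefix_prod_pos[OF assms, of i]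
          by (simp add: t_def field_simps)
      then show ?thesis using solenoid_coord_eq[OF s, of i d] by (simp add: sol_line_def)
    qed
    have "dTN s (sol_line p t) \<le> (\<Sum>n<M. dT (s n) (sol_line p t n) / 2^n) + (1/2)^M"
      by (rule dTN_le_weighted_prefix_sum)
    also have "(\<Sum>n<M. dT (s n) (sol_line p t n) / 2^n) = 0" using eq by simp
    finally have "dTN s (sol_line p t) < r" using M by simp
    then show "\<exists>y\<in>range (sol_line p). y \<in> TNM.mball s r" using s solenoid_subset_TN
      by auto
  qed
qed

lemma connectedin_solenoid: "\<forall>i. p i > 0 \<Longrightarrow> connectedin TN_top (solenoid p)"
proof -
  assume a: "\<forall>i. p i > 0"
  have "connectedin euclideanreal UNIV" by (simp add: connectedin_iff_connected)
  then have "connectedin TN_top (range (sol_line p))"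
    by (rule connectedin_continuous_map_image[OF continuous_map_sol_line[OF a]])
  then show ?thesis using solenoid_eq_closure_sol_line[OF a] connectedin_closure_of by metis
qed

lemma compactin_solenoid: "compactin TN_top (solenoid p)"
  by (intro closedin_imp_compactin_TN closedin_solenoid)

lemma solenoid_add:
  assumes "x \<in> solenoid p" "y \<in> solenoid p"
  shows "TN_add x y \<in> solenoid p"
proof -
  have "frac (real (p i) * tadd (x (Suc i)) (y (Suc i))) = tadd (x i) (y i)" for i
  proof -
    have "frac (real (p i) * tadd (x (Suc i)) (y (Suc i))) = frac (real (p i) * x (Suc i) + real (p i) * y (Suc i))"
      by (simp add: tadd_def frac_mult_frac_nat distrib_left)
    also have "\<dots> = tadd (frac (real (p i) * x (Suc i))) (frac (real (p i) * y (Suc i)))"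
      by (simp add: tadd_frac)
    finally show ?thesis using assms by (simp add: solenoid_def)
  qed
  moreover have "TN_add x y \<in> TN" by (simp add: TN_add_def tadd_def TN_def frac_lt_1)
  ultimately show ?thesis by (simp add: solenoid_def TN_add_def)
qed

lemma solenoid_neg:
  assumes "x \<in> solenoid p"
  shows "TN_neg x \<in> solenoid p"
proof -
  have "frac (real (p i) * tneg (x (Suc i))) = tneg (x i)" for i
  proof -
    have "frac (real (p i) * tneg (x (Suc i))) = frac (- (real (p i) * x (Suc i)))"
      by (simp add: tneg_def frac_mult_frac_nat)
    also have "\<dots> = tneg (frac (real (p i) * x (Suc i)))"
      by (simp add: tneg_frac)
    finally show ?thesis using assms by (simp add: solenoid_def)
  qed
  moreover have "TN_neg x \<in> TN" by (simp add: TN_neg_def tneg_def TN_def frac_lt_1)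
  ultimately show ?thesis by (simp add: solenoid_def TN_neg_def)
qed

lemma cc_subgroup_solenoid: "\<forall>i. p i > 0 \<Longrightarrow> cc_subgroup (solenoid p)"
  unfolding cc_subgroup_def
  using sol_line_in_solenoid solenoid_subset_TN solenoid_add solenoid_neg compactin_solenoid
    connectedin_solenoid by blast

definition prefix_norm :: "nat \<Rightarrow> (nat \<Rightarrow> real) \<Rightarrow> real" where
  "prefix_norm N y = (\<Sum>n<N. \<bar>y n\<bar>)"

lemma prefix_norm_nonneg: "0 \<le> prefix_norm N y" by (simp add: prefix_norm_def sum_nonneg)

lemma prefix_norm_coord: "n < N \<Longrightarrow> \<bar>y n\<bar> \<le> prefix_norm N y"
  unfolding prefix_norm_def by (rule member_le_sum) auto

lemma prefix_norm_triangle: "prefix_norm N (\<lambda>n. y n + z n) \<le> prefix_norm N y + prefix_norm N z"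
  unfolding prefix_norm_def by (simp add: sum.distrib[symmetric] sum_mono abs_triangle_ineq)

lemma prefix_norm_diff_triangle: "prefix_norm N (\<lambda>n. y n - z n) \<le> prefix_norm N (\<lambda>n. y n - u n) + prefix_norm N (\<lambda>n. u n - z n)"
  using prefix_norm_triangle[of N "\<lambda>n. y n - u n" "\<lambda>n. u n - z n"] by simp

lemma prefix_norm_scale: "prefix_norm N (\<lambda>n. c * y n) = \<bar>c\<bar> * prefix_norm N y"
  unfolding prefix_norm_def by (simp add: abs_mult sum_distrib_left)

lemma prefix_norm_zero [simp]: "prefix_norm N (\<lambda>n. 0) = 0" by (simp add: prefix_norm_def)

lemma prefix_norm_tendsto:
  assumes "\<And>n. n < N \<Longrightarrow> (\<lambda>k. X k n) \<longlonglongrightarrow> x n"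
  shows "(\<lambda>k. prefix_norm N (\<lambda>n. X k n - x n)) \<longlonglongrightarrow> 0"
proof -
  have "(\<lambda>k. \<Sum>n<N. \<bar>X k n - x n\<bar>) \<longlonglongrightarrow> (\<Sum>n<N. \<bar>x n - x n\<bar>)"
    by (intro tendsto_sum tendsto_rabs tendsto_diff assms tendsto_const) simp
  then show ?thesis by (simp add: prefix_norm_def)
qed

lemma LIMSEQ_if_abs_diff_le_inverse:
  fixes f :: "nat \<Rightarrow> real"
  assumes "\<And>k. \<bar>f k - l\<bar> \<le> c / (real k + 1)"
  shows "f \<longlonglongrightarrow> l"
proof -
  have g: "(\<lambda>k. c * inverse (real (Suc k))) \<longlonglongrightarrow> c * 0"
    by (intro tendsto_mult tendsto_const LIMSEQ_inverse_real_of_nat)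
  have "(\<lambda>k. f k - l) \<longlonglongrightarrow> 0"
    by (rule Lim_null_comparison[OF _ g[simplified]])
       (use assms in \<open>auto simp: divide_inverse add.commute\<close>)
  then have "(\<lambda>k. f k - l + l) \<longlonglongrightarrow> 0 + l"
    by (intro tendsto_add tendsto_const)
  then show ?thesis by simp
qed

lemma bounded_seq_coordwise_convergent_subseq:
  fixes X :: "nat \<Rightarrow> nat \<Rightarrow> real"
  assumes "\<And>k n. n < N \<Longrightarrow> \<bar>X k n\<bar> \<le> B"
  shows "\<exists>r. strict_mono r \<and> (\<forall>n<N. convergent (\<lambda>k. X (r k) n))"
  using assms
proof (induction N)
  case 0
  have "strict_mono (\<lambda>k::nat. k)" by (simp add: strict_mono_def)
  then show ?case by (intro exI[of _ "\<lambda>k. k"]) auto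
next
  case (Suc N)
  then obtain r where r: "strict_mono r" "\<forall>n<N. convergent (\<lambda>k. X (r k) n)" by force
  obtain f where f: "strict_mono f" "monoseq (\<lambda>k. X (r (f k)) N)"
    using seq_monosub[of "\<lambda>k. X (r k) N"] by blast
  have "Bseq (\<lambda>k. X (r (f k)) N)" using Suc.prems by (intro BseqI') auto
  then have cN: "convergent (\<lambda>k. X (r (f k)) N)" using f(2) by (rule Bseq_monoseq_convergent)
  have "convergent (\<lambda>k. X (r (f k)) n)" if "n < Suc N" for n
  proof (cases "n = N")
    case True then show ?thesis using cN by simp
  next
    case False
    then have "convergent ((\<lambda>k. X (r k) n) \<circ> f)" using r(2) that f(1)
      by (intro convergent_subseq_convergent) auto
    then show ?thesis by (simp add: o_def)
  qed
  moreover have "strict_mono (\<lambda>k. r (f k))" using strict_mono_o[OF r(1) f(1)]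
    by (simp add: o_def)
  ultimately show ?case by (intro exI[of _ "\<lambda>k. r (f k)"]) auto
qed

definition int_vector :: "nat \<Rightarrow> (nat \<Rightarrow> real) \<Rightarrow> bool" where
  "int_vector N l \<longleftrightarrow> (\<forall>n<N. l n \<in> \<int>)"

lemma dT_scaled_line_le:
  fixes M :: nat and b c d s x :: real
  assumes M: "M > 0" and c: "c \<in> \<int>" and d: "d \<in> \<int>"
  defines "t \<equiv> (frac s + of_int \<lfloor>real M * frac b\<rfloor>) / real M"
  shows "dT (x + b * d) (t * (real M * c + d)) \<le> dT x (s * c) + \<bar>d\<bar> / real M"
proof -
  define j where "j = \<lfloor>real M * frac b\<rfloor>"
  obtain kc kd where kc: "c = of_int kc" and kd: "d = of_int kd"
    using c d by (auto elim!: Ints_cases)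
  have tM: "t * real M = frac s + of_int j" using M by (simp add: t_def j_def)
  have "\<bar>real M * frac b - t * real M\<bar> \<le> 1"
    unfolding tM j_def using frac_ge_0[of s] frac_lt_1[of s] by linarith
  moreover have "real M * frac b - t * real M = real M * (frac b - t)" by (simp add: algebra_simps)
  ultimately have "real M * \<bar>frac b - t\<bar> \<le> 1" by (simp add: abs_mult)
  then have bt: "\<bar>frac b - t\<bar> \<le> 1 / real M" using M by (simp add: field_simps)
  have "t * (real M * c + d) = (frac s + of_int j) * c + t * d"
    using tM by (simp add: algebra_simps)
  then have "dT (x + b * d) (t * (real M * c + d)) \<le> dT x ((frac s + of_int j) * c) + dT (b * d) (t * d)"
    using dT_add_le by simp
  also have "dT x ((frac s + of_int j) * c) = dT x (s * c)"
    by (rule dT_eq_if_diff_eq[of _ _ _ _ "(\<lfloor>s\<rfloor> - j) * kc"]) (simp add: kc frac_def algebra_simps)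
  also have "dT (b * d) (t * d) = dT (frac b * d) (t * d)"
    by (rule dT_eq_if_diff_eq[of _ _ _ _ "\<lfloor>b\<rfloor> * kd"]) (simp add: kd frac_def algebra_simps)
  also have "\<dots> \<le> \<bar>frac b - t\<bar> * \<bar>d\<bar>"
    using dT_le_abs_diff[of "frac b * d" "t * d"] by (simp add: abs_mult[symmetric] algebra_simps)
  also have "\<dots> \<le> \<bar>d\<bar> / real M"
    using mult_right_mono[OF bt, of "\<bar>d\<bar>"] by simp
  finally show ?thesis by simp
qed

text \<open>A Kronecker-type argument: the vector is built inductively as M u0 + l, where u0 serves the
  remaining vectors and M is so large that along the line the l-component moves slowly enough to
  follow the coefficient of l.\<close>
lemma int_line_approx_combinations:
  fixes V :: "(nat \<Rightarrow> real) set"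
  assumes V0: "(\<lambda>n. 0) \<in> V"
    and V_add: "\<And>a b. a \<in> V \<Longrightarrow> b \<in> V \<Longrightarrow> (\<lambda>n. a n + b n) \<in> V"
    and V_scale: "\<And>a c. a \<in> V \<Longrightarrow> (\<lambda>n. c * a n) \<in> V"
    and ls: "\<forall>l\<in>set ls. l \<in> V \<and> int_vector N l" and \<delta>: "\<delta> > 0"
  shows "\<exists>u\<in>V. int_vector N u \<and>
           (\<forall>b. \<exists>t. \<forall>n<N. dT (\<Sum>i<length ls. b i * (ls!i) n) (t * u n) < \<delta>)"
  using ls \<delta>
proof (induction ls arbitrary: \<delta>)
  case Nil
  show ?case
    by (intro bexI[of _ "\<lambda>n. 0"] conjI allI exI[of _ 0]) (use V0 Nil in \<open>simp_all add: int_vector_def\<close>)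
next
  case (Cons l ls)
  have lV: "l \<in> V" and l_int: "int_vector N l" using Cons.prems(1) by auto
  obtain u0 where u0: "u0 \<in> V" "int_vector N u0"
    "\<forall>b. \<exists>t. \<forall>n<N. dT (\<Sum>i<length ls. b i * (ls!i) n) (t * u0 n) < \<delta>/2"
    using Cons.IH[of "\<delta>/2"] Cons.prems by auto
  obtain M :: nat where M: "real M > 2 * prefix_norm N l / \<delta>" "M > 0"
    using reals_Archimedean2[of "max 1 (2 * prefix_norm N l / \<delta>)"]
      by (auto simp: max_def split: if_splits)
  define u where "u n = real M * u0 n + l n" for n
  have "u \<in> V" unfolding u_def by (intro V_add V_scale u0(1) lV)
  moreover have "int_vector N u"
    using u0(2) l_int by (auto simp: int_vector_def u_def intro: Ints_add Ints_mult)
  moreover have "\<exists>t. \<forall>n<N. dT (\<Sum>i<length (l # ls). b i * ((l # ls)!i) n) (t * u n) < \<delta>" for b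
  proof -
    obtain s where s: "\<forall>n<N. dT (\<Sum>i<length ls. b (Suc i) * (ls!i) n) (s * u0 n) < \<delta>/2"
      using spec[OF u0(3), of "\<lambda>i. b (Suc i)"] by auto
    define t where "t = (frac s + of_int \<lfloor>real M * frac (b 0)\<rfloor>) / real M"
    have "dT (\<Sum>i<length (l # ls). b i * ((l # ls)!i) n) (t * u n) < \<delta>" if n: "n < N" for n
    proof -
      have "(\<Sum>i<length (l # ls). b i * ((l # ls)!i) n) = (\<Sum>i<length ls. b (Suc i) * (ls!i) n) + b 0 * l n"
        unfolding length_Cons sum.lessThan_Suc_shift by simp
      moreover have "u0 n \<in> \<int>" "l n \<in> \<int>" using u0(2) l_int n
        by (auto simp: int_vector_def)
      ultimately have "dT (\<Sum>i<length (l # ls). b i * ((l # ls)!i) n) (t * u n)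
          \<le> dT (\<Sum>i<length ls. b (Suc i) * (ls!i) n) (s * u0 n) + \<bar>l n\<bar> / real M"
        using dT_scaled_line_le[OF \<open>M > 0\<close>, where c="u0 n" and d="l n" and s=s and b="b 0"]
          by (simp add: u_def t_def)
      moreover have "\<bar>l n\<bar> / real M \<le> prefix_norm N l / real M"
        using prefix_norm_coord[OF n] by (simp add: divide_right_mono)
      moreover have "prefix_norm N l / real M < \<delta>/2"
        using M Cons.prems(2) by (simp add: field_simps)
      moreover have "dT (\<Sum>i<length ls. b (Suc i) * (ls!i) n) (s * u0 n) < \<delta>/2" using s n
        by blast
      ultimately show ?thesis by linarith
    qed
    then show ?thesis by blast
  qed
  ultimately show ?case by blast
qed

lemma int_line_approx_multiples:
  fixes V L :: "(nat \<Rightarrow> real) set"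
  assumes V0: "(\<lambda>n. 0) \<in> V"
    and V_add: "\<And>a b. a \<in> V \<Longrightarrow> b \<in> V \<Longrightarrow> (\<lambda>n. a n + b n) \<in> V"
    and V_scale: "\<And>a c. a \<in> V \<Longrightarrow> (\<lambda>n. c * a n) \<in> V"
    and L: "finite L" "\<forall>l\<in>L. l \<in> V \<and> int_vector N l" and \<delta>: "\<delta> > 0"
  shows "\<exists>u\<in>V. int_vector N u \<and> (\<forall>l\<in>L. \<forall>s. \<exists>t. \<forall>n<N. dT (s * l n) (t * u n) < \<delta>)"
proof -
  obtain ls where ls: "set ls = L" using finite_list[OF L(1)] by blast
  obtain u where u: "u \<in> V" "int_vector N u"
    "\<forall>b. \<exists>t. \<forall>n<N. dT (\<Sum>i<length ls. b i * (ls!i) n) (t * u n) < \<delta>"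
    using int_line_approx_combinations[OF V0 V_add V_scale _ \<delta>, of ls] L(2) unfolding ls by blast
  have "\<exists>t. \<forall>n<N. dT (s * l n) (t * u n) < \<delta>" if "l \<in> L" for l s
  proof -
    have "l \<in> set ls" using that ls by simp
    then obtain i where i: "i < length ls" "ls ! i = l" by (auto simp: in_set_conv_nth)
    have sum_eq: "(\<Sum>j<length ls. (if j = i then s else 0) * (ls!j) n) = s * l n" for n
    proof -
      have "(\<Sum>j<length ls. (if j = i then s else 0) * (ls!j) n) = (\<Sum>j<length ls. if j = i then s * l n else 0)"
        using i(2) by (intro sum.cong) auto
      then show ?thesis using i(1) by simp
    qed
    obtain t where "\<forall>n<N. dT (\<Sum>j<length ls. (if j = i then s else 0) * (ls!j) n) (t * u n) < \<delta>"
      using spec[OF u(3), of "\<lambda>j. if j = i then s else 0"] by blast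
    then show ?thesis unfolding sum_eq by blast
  qed
  then show ?thesis using u(1,2) by blast
qed

section \<open>The projection of G to finitely many coordinates\<close>

locale cc_subgroup_proj =
  fixes G :: "(nat \<Rightarrow> real) set" and N :: nat
  assumes cc: "cc_subgroup G"
begin

text \<open>In the notation of the proof idea, in_proj y says that y mod 1 lies in K, and lie_alg is W.\<close>

definition in_proj :: "(nat \<Rightarrow> real) \<Rightarrow> bool" where
  "in_proj y \<longleftrightarrow> (\<exists>g\<in>G. \<forall>n<N. g n = frac (y n))"

definition lie_alg :: "(nat \<Rightarrow> real) set" where
  "lie_alg = {w. \<forall>t. in_proj (\<lambda>n. t * w n)}"

lemma G_TN: "G \<subseteq> TN" using cc by (simp add: cc_subgroup_def)
lemma G_ne: "G \<noteq> {}" using cc by (simp add: cc_subgroup_def)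
lemma G_add: "x \<in> G \<Longrightarrow> y \<in> G \<Longrightarrow> TN_add x y \<in> G" using cc
  by (simp add: cc_subgroup_def)
lemma G_neg: "x \<in> G \<Longrightarrow> TN_neg x \<in> G" using cc by (simp add: cc_subgroup_def)
lemma G_compact: "compactin TN_top G" using cc by (simp add: cc_subgroup_def)
lemma G_connected: "connectedin TN_top G" using cc by (simp add: cc_subgroup_def)

lemma G_zero: "(\<lambda>n. 0) \<in> G"
proof -
  obtain g where g: "g \<in> G" using G_ne by auto
  have "TN_add g (TN_neg g) \<in> G" using g by (intro G_add G_neg)
  moreover have "TN_add g (TN_neg g) = (\<lambda>n. 0)"
    by (rule ext) (simp add: TN_add_def TN_neg_def tadd_def tneg_def frac_add_frac_right)
  ultimately show ?thesis by simp
qed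

lemma G_diff: "x \<in> G \<Longrightarrow> y \<in> G \<Longrightarrow> TN_add x (TN_neg y) \<in> G"
  by (intro G_add G_neg)

lemma in_proj_zero: "in_proj (\<lambda>n. 0)"
  unfolding in_proj_def using G_zero by force

lemma in_proj_add: "in_proj y \<Longrightarrow> in_proj z \<Longrightarrow> in_proj (\<lambda>n. y n + z n)"
proof -
  assume "in_proj y" "in_proj z"
  then obtain g h where g: "g \<in> G" "\<forall>n<N. g n = frac (y n)" and h: "h \<in> G" "\<forall>n<N. h n = frac (z n)"
    unfolding in_proj_def by blast
  have "TN_add g h \<in> G" using g h by (intro G_add) auto
  moreover have "\<forall>n<N. TN_add g h n = frac (y n + z n)"
    using g h by (simp add: TN_add_def tadd_frac)
  ultimately show ?thesis unfolding in_proj_def by blast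
qed

lemma in_proj_neg: "in_proj y \<Longrightarrow> in_proj (\<lambda>n. - y n)"
proof -
  assume "in_proj y"
  then obtain g where g: "g \<in> G" "\<forall>n<N. g n = frac (y n)" unfolding in_proj_def by blast
  have "TN_neg g \<in> G" using g by (intro G_neg) auto
  moreover have "\<forall>n<N. TN_neg g n = frac (- y n)"
    using g by (simp add: TN_neg_def tneg_frac)
  ultimately show ?thesis unfolding in_proj_def by blast
qed

lemma in_proj_diff: "in_proj y \<Longrightarrow> in_proj z \<Longrightarrow> in_proj (\<lambda>n. y n - z n)"
  using in_proj_add[OF _ in_proj_neg[of z], of y] by simp

lemma in_proj_nat_mult: "in_proj y \<Longrightarrow> in_proj (\<lambda>n. real m * y n)"
proof (induction m)
  case 0 then show ?case using in_proj_zero by simp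
next
  case (Suc m)
  then have "in_proj (\<lambda>n. real m * y n + y n)" by (intro in_proj_add)
  then show ?case by (simp add: algebra_simps)
qed

lemma in_proj_int_mult: "in_proj y \<Longrightarrow> in_proj (\<lambda>n. real_of_int m * y n)"
proof (cases "m \<ge> 0")
  case True
  assume "in_proj y"
  then have "in_proj (\<lambda>n. real (nat m) * y n)" by (rule in_proj_nat_mult)
  then show ?thesis using True by simp
next
  case False
  assume "in_proj y"
  then have "in_proj (\<lambda>n. - (real (nat (-m)) * y n))" by (intro in_proj_neg in_proj_nat_mult)
  then show ?thesis using False by simp
qed

lemma in_proj_closed:
  assumes Y: "\<And>k. in_proj (Y k)" and lim: "\<And>n. n < N \<Longrightarrow> (\<lambda>k. Y k n) \<longlonglongrightarrow> y n"
  shows "in_proj y"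
proof -
  have "\<forall>k. \<exists>g\<in>G. \<forall>n<N. g n = frac (Y k n)" using Y unfolding in_proj_def
    by blast
  then obtain g where g: "\<And>k. g k \<in> G" "\<And>k n. n < N \<Longrightarrow> g k n = frac (Y k n)"
    by metis
  obtain l r where l: "l \<in> G" "strict_mono r" "limitin TNM.mtopology (g \<circ> r) l sequentially"
    using G_compact[unfolded TN_top_def TNM.compactin_sequentially] g(1) by blast
  have lTN: "l \<in> TN" using l(1) G_TN by auto
  have "l n = frac (y n)" if n: "n < N" for n
  proof -
    have "dT (l n) (y n) \<le> 0 + e" if e: "e > 0" for e
    proof -
      obtain K1 where K1: "\<forall>k\<ge>K1. dTN ((g \<circ> r) k) l < e / 2 / 2^n"
        using l(3)[unfolded TNM.limit_metric_sequentially] e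
          by (meson divide_pos_pos zero_less_power zero_less_numeral half_gt_zero)
      have "(\<lambda>k. Y (r k) n) \<longlonglongrightarrow> y n"
        using LIMSEQ_subseq_LIMSEQ[OF lim[OF n] l(2)] by (simp add: o_def)
      then obtain K2 where K2: "\<forall>k\<ge>K2. norm (Y (r k) n - y n) < e / 2"
        using e unfolding LIMSEQ_iff by (meson half_gt_zero)
      define k where "k = max K1 K2"
      have a: "dTN (g (r k)) l < e / 2 / 2^n" using K1 by (simp add: k_def)
      have b: "\<bar>Y (r k) n - y n\<bar> < e / 2" using K2 by (simp add: k_def)
      have "dT (l n) (y n) \<le> dT (l n) (g (r k) n) + dT (g (r k) n) (y n)" by (rule dT_triangle)
      also have "dT (l n) (g (r k) n) \<le> 2^n * dTN (g (r k)) l" using dT_le_dTN[of "g (r k)" n l]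
        by (simp add: dT_commute)
      also have "dT (g (r k) n) (y n) \<le> \<bar>Y (r k) n - y n\<bar>" using g(2)[OF n] dT_le_abs_diff
        by simp
      finally have "dT (l n) (y n) \<le> 2^n * dTN (g (r k)) l + \<bar>Y (r k) n - y n\<bar>" by simp
      moreover have "2^n * dTN (g (r k)) l < e / 2" using a by (simp add: field_simps)
      ultimately show ?thesis using b by simp
    qed
    then have "dT (l n) (y n) \<le> 0" by (rule field_le_epsilon)
    then have "frac (l n) = frac (y n)" using dT_nonneg frac_eq_iff_dT_eq_0 by (metis order_antisym)
    then show ?thesis using frac_TN_coord[OF lTN] by simp
  qed
  then show ?thesis using l(1) unfolding in_proj_def by blast
qed

lemma lie_alg_zero: "(\<lambda>n. 0) \<in> lie_alg"
  unfolding lie_alg_def using in_proj_zero by simp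

lemma lie_alg_in_proj: "w \<in> lie_alg \<Longrightarrow> in_proj w"
  unfolding lie_alg_def by (metis (no_types) mem_Collect_eq mult_1 ext)

lemma lie_alg_add: "v \<in> lie_alg \<Longrightarrow> w \<in> lie_alg \<Longrightarrow> (\<lambda>n. v n + w n) \<in> lie_alg"
  unfolding lie_alg_def using in_proj_add by (simp add: distrib_left)

lemma lie_alg_scale: "w \<in> lie_alg \<Longrightarrow> (\<lambda>n. c * w n) \<in> lie_alg"
  unfolding lie_alg_def by (simp add: mult.assoc[symmetric])

lemma lie_alg_neg: "w \<in> lie_alg \<Longrightarrow> (\<lambda>n. - w n) \<in> lie_alg"
  using lie_alg_scale[of w "-1"] by simp

lemma lie_alg_diff: "v \<in> lie_alg \<Longrightarrow> w \<in> lie_alg \<Longrightarrow> (\<lambda>n. v n - w n) \<in> lie_alg"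
  using lie_alg_add[OF _ lie_alg_neg[of w], of v] by simp

lemma lie_alg_closed:
  assumes "\<And>k. X k \<in> lie_alg" "\<And>n. n < N \<Longrightarrow> (\<lambda>k. X k n) \<longlonglongrightarrow> y n"
  shows "y \<in> lie_alg"
  unfolding lie_alg_def
proof (intro CollectI allI)
  fix t
  show "in_proj (\<lambda>n. t * y n)"
    by (rule in_proj_closed[where Y="\<lambda>k n. t * X k n"])
       (use assms in \<open>auto simp: lie_alg_def intro: tendsto_mult_left\<close>)
qed

definition dist_lie_alg :: "(nat \<Rightarrow> real) \<Rightarrow> real" where
  "dist_lie_alg y = Inf ((\<lambda>w. prefix_norm N (\<lambda>n. y n - w n)) ` lie_alg)"

lemma dist_lie_alg_le: "w \<in> lie_alg \<Longrightarrow> dist_lie_alg y \<le> prefix_norm N (\<lambda>n. y n - w n)"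
  unfolding dist_lie_alg_def
  by (rule cInf_lower) (auto intro!: bdd_belowI[of _ 0] simp: prefix_norm_nonneg)

lemma dist_lie_alg_ge: "(\<And>w. w \<in> lie_alg \<Longrightarrow> c \<le> prefix_norm N (\<lambda>n. y n - w n)) \<Longrightarrow> c \<le> dist_lie_alg y"
  unfolding dist_lie_alg_def
  by (rule cInf_greatest) (use lie_alg_zero in auto)

lemma dist_lie_alg_approx: "dist_lie_alg y < c \<Longrightarrow> \<exists>w\<in>lie_alg. prefix_norm N (\<lambda>n. y n - w n) < c"
  unfolding dist_lie_alg_def
    using cInf_lessD[of "(\<lambda>w. prefix_norm N (\<lambda>n. y n - w n)) ` lie_alg" c] lie_alg_zero
      by auto

lemma dist_lie_alg_nonneg: "0 \<le> dist_lie_alg y"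
  by (rule dist_lie_alg_ge) (simp add: prefix_norm_nonneg)

lemma dist_lie_alg_le_norm: "dist_lie_alg y \<le> prefix_norm N y"
  using dist_lie_alg_le[OF lie_alg_zero, of y] by simp

lemma dist_lie_alg_Lipschitz: "dist_lie_alg y \<le> dist_lie_alg z + prefix_norm N (\<lambda>n. y n - z n)"
proof -
  have "dist_lie_alg y - prefix_norm N (\<lambda>n. y n - z n) \<le> dist_lie_alg z"
  proof (rule dist_lie_alg_ge)
    fix w assume "w \<in> lie_alg"
    have "dist_lie_alg y \<le> prefix_norm N (\<lambda>n. y n - w n)"
      using \<open>w \<in> lie_alg\<close> by (rule dist_lie_alg_le)
    also have "\<dots> \<le> prefix_norm N (\<lambda>n. y n - z n) + prefix_norm N (\<lambda>n. z n - w n)"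
      by (rule prefix_norm_diff_triangle)
    finally show "dist_lie_alg y - prefix_norm N (\<lambda>n. y n - z n) \<le> prefix_norm N (\<lambda>n. z n - w n)"
      by simp
  qed
  then show ?thesis by simp
qed

lemma dist_lie_alg_pos:
  assumes "y \<notin> lie_alg" shows "dist_lie_alg y > 0"
proof (rule ccontr)
  assume "\<not> dist_lie_alg y > 0"
  then have d0: "dist_lie_alg y < 1 / (real k + 1)" for k
  proof -
    have "(0::real) < 1 / (real k + 1)" by simp
    then show ?thesis using dist_lie_alg_nonneg[of y] \<open>\<not> dist_lie_alg y > 0\<close>
      by linarith
  qed
  have "\<forall>k. \<exists>w\<in>lie_alg. prefix_norm N (\<lambda>n. y n - w n) < 1 / (real k + 1)"
    using dist_lie_alg_approx[OF d0] by blast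
  then obtain w where w: "\<And>k. w k \<in> lie_alg" "\<And>k. prefix_norm N (\<lambda>n. y n - w k n) < 1 / (real k + 1)"
    by metis
  have "y \<in> lie_alg"
  proof (rule lie_alg_closed[OF w(1)])
    fix n assume "n < N"
    show "(\<lambda>k. w k n) \<longlonglongrightarrow> y n"
    proof (rule LIMSEQ_if_abs_diff_le_inverse[where c=1])
      fix k
      have "\<bar>y n - w k n\<bar> \<le> prefix_norm N (\<lambda>n. y n - w k n)"
        using prefix_norm_coord[of n N "\<lambda>n. y n - w k n"] \<open>n < N\<close> by simp
      then show "\<bar>w k n - y n\<bar> \<le> 1 / (real k + 1)" using w(2)[of k]
        by (simp add: abs_minus_commute)
    qed
  qed
  then show False using assms by simp
qed

lemma dist_lie_alg_scale_ge:
  assumes "c > 0"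
  shows "c * dist_lie_alg y \<le> dist_lie_alg (\<lambda>n. c * y n)"
proof (rule dist_lie_alg_ge)
  fix w assume "w \<in> lie_alg"
  then have "dist_lie_alg y \<le> prefix_norm N (\<lambda>n. y n - (1 / c) * w n)"
    by (intro dist_lie_alg_le lie_alg_scale)
  then have "c * dist_lie_alg y \<le> \<bar>c\<bar> * prefix_norm N (\<lambda>n. y n - (1 / c) * w n)"
    using assms by simp
  also have "\<dots> = prefix_norm N (\<lambda>n. c * y n - w n)"
    using prefix_norm_scale[of N c "\<lambda>n. y n - (1 / c) * w n"] assms by (simp add: algebra_simps)
  finally show "c * dist_lie_alg y \<le> prefix_norm N (\<lambda>n. c * y n - w n)" .
qed

text \<open>Subtract from y a point of the Lie algebra that is nearly closest to it.\<close>
lemma in_proj_far_from_lie_alg: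
  assumes y: "in_proj y" "y \<notin> lie_alg"
  shows "\<exists>z. in_proj z \<and> 0 < prefix_norm N z \<and> prefix_norm N z \<le> 2 * prefix_norm N y
           \<and> prefix_norm N z < 2 * dist_lie_alg z"
proof -
  have pos: "dist_lie_alg y > 0" using dist_lie_alg_pos[OF y(2)] .
  then have "dist_lie_alg y < 2 * dist_lie_alg y" by simp
  then obtain w where w: "w \<in> lie_alg" "prefix_norm N (\<lambda>n. y n - w n) < 2 * dist_lie_alg y"
    using dist_lie_alg_approx by blast
  define z where "z = (\<lambda>n. y n - w n)"
  have "in_proj z" unfolding z_def by (intro in_proj_diff y(1) lie_alg_in_proj w(1))
  moreover have dist_z: "dist_lie_alg y \<le> dist_lie_alg z"
  proof (rule dist_lie_alg_ge)
    fix w' assume "w' \<in> lie_alg"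
    then have "dist_lie_alg y \<le> prefix_norm N (\<lambda>n. y n - (w n + w' n))"
      by (intro dist_lie_alg_le lie_alg_add w(1))
    then show "dist_lie_alg y \<le> prefix_norm N (\<lambda>n. z n - w' n)"
      by (simp add: z_def algebra_simps)
  qed
  moreover have "prefix_norm N z < 2 * dist_lie_alg y" using w(2) by (simp add: z_def)
  moreover have "dist_lie_alg z \<le> prefix_norm N z" "dist_lie_alg y \<le> prefix_norm N y"
    by (simp_all add: dist_lie_alg_le_norm)
  ultimately have "0 < prefix_norm N z" "prefix_norm N z \<le> 2 * prefix_norm N y"
    "prefix_norm N z < 2 * dist_lie_alg z"
    using pos by linarith+
  with \<open>in_proj z\<close> show ?thesis by blast
qed

lemma lie_alg_contains_limit_direction:
  assumes Z: "\<And>k. in_proj (Z k)" and a_pos: "\<And>k. a k > 0" and a_lim: "a \<longlonglongrightarrow> 0"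
    and lim: "\<And>n. n < N \<Longrightarrow> (\<lambda>k. Z k n / a k) \<longlonglongrightarrow> d n"
  shows "d \<in> lie_alg"
  unfolding lie_alg_def
proof (intro CollectI allI)
  fix t
  define m where "m k = \<lfloor>t / a k\<rfloor>" for k
  have "\<bar>m k * a k - t\<bar> \<le> a k" for k
  proof -
    have "real_of_int (m k) \<le> t / a k" "t / a k < real_of_int (m k) + 1"
      unfolding m_def by linarith+
    then have "real_of_int (m k) * a k \<le> t" "t < (real_of_int (m k) + 1) * a k"
      using a_pos[of k] by (simp_all add: field_simps)
    then show ?thesis by (simp add: algebra_simps)
  qed
  then have "(\<lambda>k. m k * a k - t) \<longlonglongrightarrow> 0"
    by (intro Lim_null_comparison[OF _ a_lim]) auto
  then have m_lim: "(\<lambda>k. m k * a k) \<longlonglongrightarrow> t" by (rule LIM_zero_cancel)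
  show "in_proj (\<lambda>n. t * d n)"
  proof (rule in_proj_closed[where Y="\<lambda>k n. real_of_int (m k) * Z k n"])
    show "in_proj (\<lambda>n. real_of_int (m k) * Z k n)" for k by (intro in_proj_int_mult Z)
    fix n assume n: "n < N"
    have "(\<lambda>k. (m k * a k) * (Z k n / a k)) \<longlonglongrightarrow> t * d n"
      by (intro tendsto_mult m_lim lim n)
    moreover have "(m k * a k) * (Z k n / a k) = real_of_int (m k) * Z k n" for k
      using a_pos[of k] by simp
    ultimately show "(\<lambda>k. real_of_int (m k) * Z k n) \<longlonglongrightarrow> t * d n" by simp
  qed
qed

text \<open>A compactness argument: otherwise there are elements of the projection outside the Lie
  algebra, arbitrarily small and at relative distance more than 1/2 from it; a limit of their
  directions lies in the Lie algebra.\<close>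
lemma small_in_proj_imp_in_lie_alg: "\<exists>r>0. \<forall>y. in_proj y \<and> prefix_norm N y < r \<longrightarrow> y \<in> lie_alg"
proof (rule ccontr)
  assume neg: "\<not> ?thesis"
  have "\<exists>z. in_proj z \<and> 0 < prefix_norm N z \<and> prefix_norm N z \<le> 2 / (real k + 1)
          \<and> prefix_norm N z < 2 * dist_lie_alg z" for k
  proof -
    have "(0::real) < 1 / (real k + 1)" by simp
    then obtain y where "in_proj y" "prefix_norm N y < 1 / (real k + 1)" "y \<notin> lie_alg"
      using neg by blast
    then show ?thesis using in_proj_far_from_lie_alg by fastforce
  qed
  then obtain Z where Z: "\<And>k. in_proj (Z k)" "\<And>k. 0 < prefix_norm N (Z k)"
    "\<And>k. prefix_norm N (Z k) \<le> 2 / (real k + 1)" "\<And>k. prefix_norm N (Z k) < 2 * dist_lie_alg (Z k)"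
    by metis
  define a where "a k = prefix_norm N (Z k)" for k
  define D where "D k = (\<lambda>n. Z k n / a k)" for k
  have a_pos: "a k > 0" for k using Z(2) by (simp add: a_def)
  have D_bound: "\<bar>D k n\<bar> \<le> 1" if "n < N" for k n
    using prefix_norm_coord[OF that, of "Z k"] a_pos[of k] by (simp add: D_def a_def abs_divide)
  have D_far: "dist_lie_alg (D k) > 1/2" for k
  proof -
    have "(1 / a k) * dist_lie_alg (Z k) \<le> dist_lie_alg (D k)"
      using dist_lie_alg_scale_ge[of "1 / a k" "Z k"] a_pos[of k] by (simp add: D_def)
    moreover have "1/2 < (1 / a k) * dist_lie_alg (Z k)"
      using Z(4)[of k] a_pos[of k] by (simp add: a_def field_simps)
    ultimately show ?thesis by linarith
  qed
  obtain s where s: "strict_mono s" "\<forall>n<N. convergent (\<lambda>k. D (s k) n)"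
    using bounded_seq_coordwise_convergent_subseq[of N D 1] D_bound by blast
  define d where "d n = lim (\<lambda>k. D (s k) n)" for n
  have d_lim: "(\<lambda>k. D (s k) n) \<longlonglongrightarrow> d n" if "n < N" for n
    using s(2) that convergent_LIMSEQ_iff unfolding d_def by blast
  have "(\<lambda>k. a (s k)) \<longlonglongrightarrow> 0"
  proof (rule LIMSEQ_if_abs_diff_le_inverse[where c=2])
    fix k
    have "2 / (real (s k) + 1) \<le> 2 / (real k + 1)"
      using seq_suble[OF s(1), of k] by (intro divide_left_mono) auto
    then show "\<bar>a (s k) - 0\<bar> \<le> 2 / (real k + 1)" using Z(3)[of "s k"] a_pos[of "s k"]
      by (simp add: a_def)
  qed
  then have "d \<in> lie_alg"
    using Z(1) a_pos d_lim
      by (intro lie_alg_contains_limit_direction[where Z="\<lambda>k. Z (s k)"]) (auto simp: D_def)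
  then have "dist_lie_alg d \<le> 0" using dist_lie_alg_le[of d d] by simp
  have "(\<lambda>k. prefix_norm N (\<lambda>n. D (s k) n - d n)) \<longlonglongrightarrow> 0"
    by (rule prefix_norm_tendsto) (rule d_lim)
  then obtain k where "norm (prefix_norm N (\<lambda>n. D (s k) n - d n) - 0) < 1/2"
    using LIMSEQ_D[of _ 0 "1/2"] by fastforce
  then have "prefix_norm N (\<lambda>n. D (s k) n - d n) < 1/2" by simp
  moreover have "dist_lie_alg (D (s k)) \<le> dist_lie_alg d + prefix_norm N (\<lambda>n. D (s k) n - d n)"
    by (rule dist_lie_alg_Lipschitz)
  ultimately show False using D_far[of "s k"] \<open>dist_lie_alg d \<le> 0\<close> by simp
qed

definition r_lie_alg :: real where
  "r_lie_alg = (SOME r. r > 0 \<and> (\<forall>y. in_proj y \<and> prefix_norm N y < r \<longrightarrow> y \<in> lie_alg))"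

lemma r_lie_alg: "r_lie_alg > 0" "\<And>y. in_proj y \<Longrightarrow> prefix_norm N y < r_lie_alg \<Longrightarrow> y \<in> lie_alg"
  using someI_ex[OF small_in_proj_imp_in_lie_alg] unfolding r_lie_alg_def by blast+

definition r_lift :: real where
  "r_lift = r_lie_alg / (real N * 2^N + 1)"

lemma r_lift_pos: "r_lift > 0"
  using r_lie_alg(1) by (simp add: r_lift_def add_nonneg_pos)

lemma close_elements_differ_in_lie_alg:
  assumes g: "g \<in> G" and g': "g' \<in> G" and d: "dTN g g' < r_lift"
  shows "\<exists>y\<in>lie_alg. prefix_norm N y < r_lie_alg \<and> (\<forall>n<N. frac (g n + y n) = g' n)"
proof -
  have "\<forall>n. \<exists>k. dT (g' n) (g n) = \<bar>g' n - g n - of_int k\<bar>"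
    using dT_eq_abs_diff_int by blast
  then obtain k where k: "\<And>n. dT (g' n) (g n) = \<bar>g' n - g n - of_int (k n)\<bar>" by metis
  define y where "y n = g' n - g n - of_int (k n)" for n
  have gTN: "g \<in> TN" "g' \<in> TN" using g g' G_TN by auto
  have "in_proj y"
    unfolding in_proj_def
  proof (intro bexI[of _ "TN_add g' (TN_neg g)"] allI impI)
    show "TN_add g' (TN_neg g) \<in> G" using g g' by (intro G_diff)
    fix n
    have "TN_add g' (TN_neg g) n = frac (g' n - g n)"
      by (simp add: TN_add_def TN_neg_def tadd_def tneg_def frac_add_frac_right)
    also have "\<dots> = frac (y n)" by (rule frac_eq_if_diff_int[of _ _ "k n"]) (simp add: y_def)
    finally show "TN_add g' (TN_neg g) n = frac (y n)" .
  qed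
  moreover have "prefix_norm N y < r_lie_alg"
  proof -
    have "prefix_norm N y = (\<Sum>n<N. dT (g' n) (g n))" unfolding prefix_norm_def y_def using k by simp
    also have "\<dots> \<le> real N * 2^N * dTN g' g" by (rule sum_dT_le_dTN)
    also have "\<dots> \<le> (real N * 2^N + 1) * dTN g g'"
      using dTN_nonneg[of g g'] by (simp add: dTN_sym algebra_simps)
    also have "\<dots> < (real N * 2^N + 1) * r_lift" using d
      by (intro mult_strict_left_mono) (auto simp: add_nonneg_pos)
    also have "\<dots> = r_lie_alg"
      using add_nonneg_pos[of "real N * 2^N" 1] by (simp add: r_lift_def)
    finally show ?thesis .
  qed
  ultimately have "y \<in> lie_alg" by (rule r_lie_alg(2))
  moreover have "frac (g n + y n) = g' n" for n
  proof -
    have "frac (g n + y n) = frac (g' n)" by (rule frac_eq_if_diff_int[of _ _ "- k n"]) (simp add: y_def)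
    then show ?thesis using frac_TN_coord[OF gTN(2)] by simp
  qed
  ultimately show ?thesis using \<open>prefix_norm N y < r_lie_alg\<close> by blast
qed

definition liftable :: "(nat \<Rightarrow> real) set" where
  "liftable = {g \<in> G. \<exists>w\<in>lie_alg. \<forall>n<N. g n = frac (w n)}"

lemma liftable_if_close:
  assumes g: "g \<in> liftable" and g': "g' \<in> G" and d: "dTN g g' < r_lift"
  shows "g' \<in> liftable"
proof -
  obtain w where w: "w \<in> lie_alg" "\<forall>n<N. g n = frac (w n)" and "g \<in> G"
    using g unfolding liftable_def by blast
  obtain y where y: "y \<in> lie_alg" "\<forall>n<N. frac (g n + y n) = g' n"
    using close_elements_differ_in_lie_alg[OF \<open>g \<in> G\<close> g' d] by blast
  have "g' n = frac (w n + y n)" if "n < N" for n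
  proof -
    have "frac (w n + y n) = frac (frac (w n) + y n)" by (simp add: frac_add_frac_left)
    then show ?thesis using w(2) y(2) that by simp
  qed
  then show ?thesis unfolding liftable_def using g' lie_alg_add[OF w(1) y(1)]
    by (intro CollectI conjI bexI[of _ "\<lambda>n. w n + y n"]) auto
qed

lemma liftable_eq_G: "liftable = G"
proof -
  interpret MG: Metric_space G dTN using G_TN by (rule Metric_space_subset_TN)
  have cs: "connected_space MG.mtopology"
    using G_connected subtopology_TN_top[OF G_TN] by (simp add: connectedin_def)
  have liftable_subset: "liftable \<subseteq> G" by (auto simp: liftable_def)
  have op: "openin MG.mtopology T" if T: "T = liftable \<or> T = G - liftable" for T
    unfolding MG.openin_mtopology
  proof (intro conjI allI impI)
    show "T \<subseteq> G" using T liftable_subset by auto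
    fix x assume "x \<in> T"
    show "\<exists>r>0. MG.mball x r \<subseteq> T"
    proof (intro exI[of _ r_lift] conjI r_lift_pos subsetI)
      fix z assume "z \<in> MG.mball x r_lift"
      then have z: "z \<in> G" "dTN x z < r_lift" "dTN z x < r_lift" by (auto simp: dTN_sym)
      then show "z \<in> T" using liftable_if_close \<open>x \<in> T\<close> T by blast
    qed
  qed
  have "openin MG.mtopology liftable" using op by auto
  moreover have "closedin MG.mtopology liftable"
    unfolding closedin_def using op[of "G - liftable"] liftable_subset by auto
  ultimately have "liftable = {} \<or> liftable = G" using cs[unfolded connected_space_clopen_in] by auto
  moreover have "(\<lambda>n. 0) \<in> liftable" unfolding liftable_def using G_zero lie_alg_zero
    by force
  ultimately show ?thesis by auto
qed

lemma G_lifts_to_lie_alg: "g \<in> G \<Longrightarrow> \<exists>w\<in>lie_alg. \<forall>n<N. g n = frac (w n)"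
  using liftable_eq_G by (auto simp: liftable_def)

lemma G_finite_net:
  assumes "r > 0"
  shows "\<exists>K. finite K \<and> K \<subseteq> G \<and> (\<forall>g\<in>G. \<exists>x\<in>K. dTN x g < r)"
proof -
  have "TNM.mtotally_bounded G"
    using G_compact by (simp add: TN_top_def TNM.compactin_imp_mtotally_bounded)
  then obtain K where K: "finite K" "K \<subseteq> G" "G \<subseteq> (\<Union>x\<in>K. TNM.mball x r)"
    using assms unfolding TNM.mtotally_bounded_def by meson
  have "\<exists>x\<in>K. dTN x g < r" if g: "g \<in> G" for g
  proof -
    obtain x where "x \<in> K" "g \<in> TNM.mball x r" using K(3) g by blast
    then show ?thesis by auto
  qed
  then show ?thesis using K(1,2) by blast
qed

text \<open>Cover G by finitely many r_lift-balls and lift their centres to the Lie algebra; an element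
  of the Lie algebra differs from the lift of a nearby centre by a small element plus an integer
  vector.\<close>
lemma lie_alg_int_vector_near: "\<exists>R. \<forall>w\<in>lie_alg. \<exists>l\<in>lie_alg. int_vector N l \<and> prefix_norm N (\<lambda>n. w n - l n) \<le> R"
proof -
  obtain K where K: "finite K" "K \<subseteq> G" "\<forall>g\<in>G. \<exists>x\<in>K. dTN x g < r_lift"
    using G_finite_net[OF r_lift_pos] by blast
  have "\<forall>x\<in>K. \<exists>w\<in>lie_alg. \<forall>n<N. x n = frac (w n)"
    using K(2) G_lifts_to_lie_alg by blast
  then obtain wf where wf0: "\<forall>x\<in>K. wf x \<in> lie_alg \<and> (\<forall>n<N. x n = frac (wf x n))"
    using bchoice[of K "\<lambda>x w. w \<in> lie_alg \<and> (\<forall>n<N. x n = frac (w n))"] by blast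
  have wf: "\<And>x. x \<in> K \<Longrightarrow> wf x \<in> lie_alg" "\<And>x n. x \<in> K \<Longrightarrow> n < N \<Longrightarrow> x n = frac (wf x n)"
    using wf0 by auto
  define R where "R = (\<Sum>x\<in>K. prefix_norm N (wf x)) + r_lie_alg"
  show ?thesis
  proof (intro exI[of _ R] ballI)
    fix w assume w: "w \<in> lie_alg"
    then obtain g where g: "g \<in> G" "\<forall>n<N. g n = frac (w n)" using lie_alg_in_proj
      unfolding in_proj_def by blast
    then obtain x where x: "x \<in> K" and dxg: "dTN x g < r_lift" using K(3) by blast
    have xG: "x \<in> G" using x K(2) by blast
    obtain y where y: "y \<in> lie_alg" "prefix_norm N y < r_lie_alg" "\<forall>n<N. frac (x n + y n) = g n"
      using close_elements_differ_in_lie_alg[OF xG g(1) dxg] by blast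
    define l where "l n = w n - wf x n - y n" for n
    have "l \<in> lie_alg" unfolding l_def by (intro lie_alg_diff w wf(1) x y(1))
    moreover have "int_vector N l"
      unfolding int_vector_def
    proof (intro allI impI)
      fix n assume n: "n < N"
      have e1: "g n = frac (w n)" using g(2) n by blast
      have e2: "frac (x n + y n) = g n" using y(3) n by blast
      have e3: "x n = frac (wf x n)" using wf(2)[OF x n] .
      have "frac (w n) = frac (frac (wf x n) + y n)" using e1 e2 e3 by simp
      then have "frac (w n) = frac (wf x n + y n)" by (simp add: frac_add_frac_left)
      then have "w n - (wf x n + y n) \<in> \<int>" by (rule diff_Ints_if_frac_eq)
      then show "l n \<in> \<int>" by (simp add: l_def diff_diff_eq)
    qed
    moreover have "prefix_norm N (\<lambda>n. w n - l n) \<le> R"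
    proof -
      have "prefix_norm N (\<lambda>n. w n - l n) = prefix_norm N (\<lambda>n. wf x n + y n)"
        by (simp add: l_def)
      also have "\<dots> \<le> prefix_norm N (wf x) + prefix_norm N y" by (rule prefix_norm_triangle)
      also have "prefix_norm N (wf x) \<le> (\<Sum>x\<in>K. prefix_norm N (wf x))"
        using x K(1) by (intro member_le_sum prefix_norm_nonneg) auto
      finally show ?thesis using y(2) by (simp add: R_def)
    qed
    ultimately show "\<exists>l\<in>lie_alg. int_vector N l \<and> prefix_norm N (\<lambda>n. w n - l n) \<le> R"
      by blast
  qed
qed

lemma G_near_int_line:
  assumes g: "g \<in> G" and e: "e > 0"
  shows "\<exists>l\<in>lie_alg. int_vector N l \<and> (\<exists>t. \<forall>n<N. dT (g n) (t * l n) < e)"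
proof -
  obtain R where R: "\<And>w. w \<in> lie_alg \<Longrightarrow> \<exists>l\<in>lie_alg. int_vector N l \<and> prefix_norm N (\<lambda>n. w n - l n) \<le> R"
    using lie_alg_int_vector_near by blast
  obtain w where w: "w \<in> lie_alg" "\<forall>n<N. g n = frac (w n)" using G_lifts_to_lie_alg[OF g]
    by blast
  obtain M :: nat where M: "real M > \<bar>R\<bar> / e" using reals_Archimedean2 by blast
  have "\<bar>R\<bar> / e \<ge> 0" using e by simp
  then have Mpos: "real M > 0" using M by linarith
  obtain l where l: "l \<in> lie_alg" "int_vector N l" "prefix_norm N (\<lambda>n. real M * w n - l n) \<le> R"
    using R[OF lie_alg_scale[OF w(1), of "real M"]] by blast
  have "\<forall>n<N. dT (g n) ((1 / real M) * l n) < e"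
  proof (intro allI impI)
    fix n assume n: "n < N"
    have "dT (g n) ((1 / real M) * l n) = dT (w n) ((1 / real M) * l n)" using w(2) n by simp
    also have "\<dots> \<le> \<bar>w n - (1 / real M) * l n\<bar>" by (rule dT_le_abs_diff)
    also have "\<dots> = \<bar>real M * w n - l n\<bar> / real M"
      using Mpos by (simp add: field_simps abs_divide)
    also have "\<dots> \<le> R / real M"
      using prefix_norm_coord[of n N "\<lambda>n. real M * w n - l n"] n l(3) Mpos
        by (simp add: divide_right_mono)
    also have "\<dots> < e" using M Mpos e by (simp add: divide_less_eq field_simps)
    finally show "dT (g n) ((1 / real M) * l n) < e" .
  qed
  then show ?thesis using l by blast
qed

lemma G_near_single_int_line:
  assumes e: "e > 0"
  shows "\<exists>u\<in>lie_alg. int_vector N u \<and> (\<forall>g\<in>G. \<exists>t. \<forall>n<N. dT (g n) (t * u n) < e)"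
proof -
  have e4: "e/4 > 0" using e by simp
  obtain K where K: "finite K" "K \<subseteq> G" "\<forall>g\<in>G. \<exists>x\<in>K. dTN x g < (e/2) / 2^N"
    using G_finite_net[of "(e/2) / 2^N"] e by auto
  have "\<forall>x\<in>K. \<exists>l. l \<in> lie_alg \<and> int_vector N l \<and> (\<exists>t. \<forall>n<N. dT (x n) (t * l n) < e/4)"
    using G_near_int_line[OF _ e4] K(2) by blast
  then obtain lf where lf: "\<forall>x\<in>K. lf x \<in> lie_alg \<and> int_vector N (lf x)
      \<and> (\<exists>t. \<forall>n<N. dT (x n) (t * lf x n) < e/4)"
    using bchoice[of K "\<lambda>x l. l \<in> lie_alg \<and> int_vector N l \<and> (\<exists>t. \<forall>n<N. dT (x n) (t * l n) < e/4)"]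
    by blast
  then obtain tf where tf: "\<forall>x\<in>K. \<forall>n<N. dT (x n) (tf x * lf x n) < e/4"
    using bchoice[of K "\<lambda>x t. \<forall>n<N. dT (x n) (t * lf x n) < e/4"] by blast
  have "\<forall>l\<in>lf ` K. l \<in> lie_alg \<and> int_vector N l" using lf by blast
  then obtain u where u: "u \<in> lie_alg" "int_vector N u"
    "\<forall>l\<in>lf ` K. \<forall>s. \<exists>t. \<forall>n<N. dT (s * l n) (t * u n) < e/4"
    using int_line_approx_multiples[OF lie_alg_zero lie_alg_add lie_alg_scale finite_imageI[OF K(1)] _ e4]
    by blast
  have "\<exists>t. \<forall>n<N. dT (g n) (t * u n) < e" if g: "g \<in> G" for g
  proof -
    obtain x where x: "x \<in> K" "dTN x g < (e/2) / 2^N" using K(3) g by blast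
    obtain t where t: "\<forall>n<N. dT (tf x * lf x n) (t * u n) < e/4" using u(3) x(1) by blast
    have "dT (g n) (t * u n) < e" if n: "n < N" for n
    proof -
      have "dT (x n) (g n) < e/2" using dT_lt_if_dTN_lt[of n N x g "e/2"] x(2) n by simp
      moreover have "dT (g n) (t * u n) \<le> dT (x n) (g n) + dT (x n) (tf x * lf x n) + dT (tf x * lf x n) (t * u n)"
        using dT_triangle[of "g n" "t * u n" "x n"] dT_triangle[of "x n" "t * u n" "tf x * lf x n"] dT_commute[of "x n" "g n"]
        by linarith
      moreover have "dT (x n) (tf x * lf x n) < e/4" "dT (tf x * lf x n) (t * u n) < e/4"
        using tf x(1) t n by blast+
      ultimately show ?thesis by linarith
    qed
    then show ?thesis by blast
  qed
  then show ?thesis using u(1,2) by blast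
qed

end

section \<open>A copy of the solenoid close to G\<close>

definition prefix_embed :: "nat \<Rightarrow> (nat \<Rightarrow> real) \<Rightarrow> (nat \<Rightarrow> real) \<Rightarrow> nat \<Rightarrow> real" where
  "prefix_embed N u s = (\<lambda>n. if n < N then frac (s 0 * u n) else s (n - N))"

definition drop_prefix :: "nat \<Rightarrow> (nat \<Rightarrow> real) \<Rightarrow> nat \<Rightarrow> real" where
  "drop_prefix N x = (\<lambda>n. x (n + N))"

lemma drop_prefix_prefix_embed [simp]: "drop_prefix N (prefix_embed N u s) = s"
  by (rule ext) (simp add: drop_prefix_def prefix_embed_def)

lemma prefix_embed_TN: "s \<in> TN \<Longrightarrow> prefix_embed N u s \<in> TN"
  by (auto simp: prefix_embed_def TN_def frac_lt_1)

lemma prefix_embed_add: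
  assumes u: "int_vector N u"
  shows "TN_add (prefix_embed N u s) (prefix_embed N u s') = prefix_embed N u (TN_add s s')"
proof (rule ext)
  fix n
  show "TN_add (prefix_embed N u s) (prefix_embed N u s') n = prefix_embed N u (TN_add s s') n"
  proof (cases "n < N")
    case True
    have "prefix_embed N u (TN_add s s') n = frac (frac (s 0 + s' 0) * u n)"
      using True by (simp add: prefix_embed_def TN_add_def tadd_def)
    also have "\<dots> = frac ((s 0 + s' 0) * u n)" using u True
      by (simp add: int_vector_def frac_frac_mult_int)
    also have "\<dots> = tadd (frac (s 0 * u n)) (frac (s' 0 * u n))"
      by (simp add: tadd_frac distrib_right)
    finally show ?thesis using True by (simp add: prefix_embed_def TN_add_def)
  next
    case False then show ?thesis by (simp add: prefix_embed_def TN_add_def)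
  qed
qed

lemma prefix_embed_neg:
  assumes u: "int_vector N u"
  shows "TN_neg (prefix_embed N u s) = prefix_embed N u (TN_neg s)"
proof (rule ext)
  fix n
  show "TN_neg (prefix_embed N u s) n = prefix_embed N u (TN_neg s) n"
  proof (cases "n < N")
    case True
    have "prefix_embed N u (TN_neg s) n = frac (frac (- s 0) * u n)"
      using True by (simp add: prefix_embed_def TN_neg_def tneg_def)
    also have "\<dots> = frac (- s 0 * u n)" using u True
      by (simp add: int_vector_def frac_frac_mult_int)
    also have "\<dots> = tneg (frac (s 0 * u n))" by (simp add: tneg_frac)
    finally show ?thesis using True by (simp add: prefix_embed_def TN_neg_def)
  next
    case False then show ?thesis by (simp add: prefix_embed_def TN_neg_def)
  qed
qed

lemma prefix_embed_Lipschitz: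
  assumes u: "int_vector N u"
  shows "dTN (prefix_embed N u s) (prefix_embed N u s') \<le> ((\<Sum>n<N. \<bar>u n\<bar>) + 1) * dTN s s'"
proof -
  have split: "dTN (prefix_embed N u s) (prefix_embed N u s') = (\<Sum>n<N. dT (prefix_embed N u s n) (prefix_embed N u s' n) / 2^n) + (1/2)^N * dTN s s'"
    using dTN_split[of "prefix_embed N u s" "prefix_embed N u s'" N] dTN_tail_eq[of "prefix_embed N u s" N "prefix_embed N u s'"]
    by (simp add: drop_prefix_def[symmetric])
  have "(\<Sum>n<N. dT (prefix_embed N u s n) (prefix_embed N u s' n) / 2^n) \<le> (\<Sum>n<N. \<bar>u n\<bar> * dTN s s')"
  proof (rule sum_mono)
    fix n assume "n \<in> {..<N}"
    then have n: "n < N" by simp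
    then obtain k where k: "u n = of_int k" using u Ints_cases unfolding int_vector_def by metis
    have "dT (prefix_embed N u s n) (prefix_embed N u s' n) / 2^n \<le> dT (prefix_embed N u s n) (prefix_embed N u s' n)"
      using dT_nonneg[of "prefix_embed N u s n" "prefix_embed N u s' n"] mult_left_mono[of 1 "2^n" "dT (prefix_embed N u s n) (prefix_embed N u s' n)"]
      by (simp add: divide_le_eq)
    also have "\<dots> = dT (of_int k * s 0) (of_int k * s' 0)" using n k
      by (simp add: prefix_embed_def mult.commute)
    also have "\<dots> \<le> \<bar>of_int k\<bar> * dT (s 0) (s' 0)" by (rule dT_mult_int_le)
    also have "\<dots> \<le> \<bar>of_int k\<bar> * dTN s s'" using dT_le_dTN[of s 0 s']
      by (intro mult_left_mono) auto
    finally show "dT (prefix_embed N u s n) (prefix_embed N u s' n) / 2^n \<le> \<bar>u n\<bar> * dTN s s'"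
      using k by simp
  qed
  also have "\<dots> = (\<Sum>n<N. \<bar>u n\<bar>) * dTN s s'" by (simp add: sum_distrib_right)
  finally have A: "(\<Sum>n<N. dT (prefix_embed N u s n) (prefix_embed N u s' n) / 2^n) \<le> (\<Sum>n<N. \<bar>u n\<bar>) * dTN s s'" .
  have "(1/2::real)^N * dTN s s' \<le> 1 * dTN s s'"
    by (intro mult_right_mono dTN_nonneg) (simp add: power_le_one)
  then show ?thesis using split A by (simp add: algebra_simps)
qed

lemma continuous_map_prefix_embed:
  "int_vector N u \<Longrightarrow> continuous_map TN_top TN_top (prefix_embed N u)"
  using continuous_map_if_Lipschitz[of TN TN "prefix_embed N u", OF _ _ _ prefix_embed_Lipschitz] prefix_embed_TN
  by (auto simp: TN_top_def)

lemma cc_subgroup_image: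
  assumes G: "cc_subgroup G" and f_TN: "f ` TN \<subseteq> TN"
    and f_cont: "continuous_map TN_top TN_top f"
    and f_add: "\<And>x y. f (TN_add x y) = TN_add (f x) (f y)"
    and f_neg: "\<And>x. f (TN_neg x) = TN_neg (f x)"
  shows "cc_subgroup (f ` G)"
proof -
  have "G \<noteq> {}" and G_TN: "G \<subseteq> TN" and G_add: "\<forall>x\<in>G. \<forall>y\<in>G. TN_add x y \<in> G"
    and G_neg: "\<forall>x\<in>G. TN_neg x \<in> G" and "compactin TN_top G" "connectedin TN_top G"
    using G by (simp_all add: cc_subgroup_def)
  moreover have "f ` G \<subseteq> TN" using G_TN f_TN by blast
  moreover have "\<forall>x\<in>f ` G. \<forall>y\<in>f ` G. TN_add x y \<in> f ` G"
    using G_add by (auto simp flip: f_add)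
  moreover have "\<forall>x\<in>f ` G. TN_neg x \<in> f ` G"
    using G_neg by (auto simp flip: f_neg)
  ultimately show ?thesis
    unfolding cc_subgroup_def
    using image_compactin[OF _ f_cont] connectedin_continuous_map_image[OF f_cont] by blast
qed

lemma top_group_iso_prefix_embed_image:
  assumes S: "S \<subseteq> TN" and u: "int_vector N u"
  shows "top_group_iso (prefix_embed N u ` S) S"
  unfolding top_group_iso_def
proof (intro exI[of _ "drop_prefix N"] conjI ballI)
  have H_TN: "prefix_embed N u ` S \<subseteq> TN" using S prefix_embed_TN by blast
  have inverse: "\<forall>x\<in>prefix_embed N u ` S. prefix_embed N u (drop_prefix N x) = x" by auto
  show "bij_betw (drop_prefix N) (prefix_embed N u ` S) S"
    by (rule bij_betw_byWitness[where f'="prefix_embed N u", OF inverse]) auto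
  show "drop_prefix N (TN_add x y) = TN_add (drop_prefix N x) (drop_prefix N y)" for x y
    by (simp add: drop_prefix_def TN_add_def)
  have "continuous_map (subtopology TN_top (prefix_embed N u ` S)) (subtopology TN_top S) (drop_prefix N)"
  proof (rule continuous_map_if_Lipschitz[OF H_TN S])
    show "drop_prefix N ` prefix_embed N u ` S \<subseteq> S" by auto
    show "dTN (drop_prefix N x) (drop_prefix N y) \<le> 2^N * dTN x y" for x y
      using dTN_drop_le[of x N y] by (simp add: drop_prefix_def)
  qed
  moreover have "continuous_map (subtopology TN_top S) (subtopology TN_top (prefix_embed N u ` S)) (prefix_embed N u)"
    by (rule continuous_map_if_Lipschitz[OF S H_TN _ prefix_embed_Lipschitz[OF u]]) simp
  ultimately show "homeomorphic_map (subtopology TN_top (prefix_embed N u ` S)) (subtopology TN_top S) (drop_prefix N)"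
    unfolding homeomorphic_map_maps homeomorphic_maps_def
    using S H_TN by (intro exI[of _ "prefix_embed N u"]) (auto simp: TN_top_def)
qed

lemma hausd_TN_le:
  assumes "A \<noteq> {}" "B \<noteq> {}"
    and "\<forall>a\<in>A. \<exists>b\<in>B. dTN a b \<le> r" "\<forall>b\<in>B. \<exists>a\<in>A. dTN a b \<le> r"
  shows "hausd_TN A B \<le> r"
proof -
  have "(INF b\<in>B. dTN a b) \<le> r" if "a \<in> A" for a
    using assms(3) that cINF_lower[OF bdd_belowI2[of _ 0 "dTN a"]] dTN_nonneg by (meson order_trans)
  moreover have "(INF a\<in>A. dTN a b) \<le> r" if "b \<in> B" for b
    using assms(4) that cINF_lower[OF bdd_belowI2[of _ 0 "\<lambda>a. dTN a b"]] dTN_nonneg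
      by (meson order_trans)
  ultimately show ?thesis
    unfolding hausd_TN_def using assms(1,2) by (simp add: cSUP_least)
qed

lemma dTN_prefix_embed_sol_line_le:
  assumes u: "int_vector N u" and close: "\<forall>n<N. dT (g n) (t * u n) \<le> e"
  shows "dTN g (prefix_embed N u (sol_line p t)) \<le> real N * e + (1/2)^N"
proof -
  have "dT (g n) (prefix_embed N u (sol_line p t) n) \<le> e" if n: "n < N" for n
  proof -
    have "u n \<in> \<int>" using u n by (simp add: int_vector_def)
    then have "prefix_embed N u (sol_line p t) n = frac (t * u n)"
      using n by (simp add: prefix_embed_def frac_frac_mult_int)
    then show ?thesis using close n by simp
  qed
  then have "(\<Sum>n<N. dT (g n) (prefix_embed N u (sol_line p t) n)) \<le> (\<Sum>n<N. e)"
    by (intro sum_mono) simp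
  then show ?thesis using dTN_le_prefix_sum[of g "prefix_embed N u (sol_line p t)" N] by simp
qed

lemma (in cc_subgroup_proj) prefix_embed_near_G:
  assumes "u \<in> lie_alg"
  shows "\<exists>g\<in>G. dTN g (prefix_embed N u s) \<le> (1/2)^N"
proof -
  obtain g where g: "g \<in> G" "\<forall>n<N. g n = frac (s 0 * u n)"
    using assms unfolding lie_alg_def in_proj_def by blast
  have "(\<Sum>n<N. dT (g n) (prefix_embed N u s n)) = 0" using g(2) by (simp add: prefix_embed_def)
  then show ?thesis using g(1) dTN_le_prefix_sum[of g "prefix_embed N u s" N] by auto
qed

lemma cc_subgroup_prefix_embed_solenoid:
  assumes p: "\<forall>i. p i > 0" and u: "int_vector N u"
  shows "cc_subgroup (prefix_embed N u ` solenoid p)"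
  using cc_subgroup_solenoid[OF p] prefix_embed_TN continuous_map_prefix_embed[OF u]
  by (intro cc_subgroup_image) (auto simp: prefix_embed_add[OF u] prefix_embed_neg[OF u])

lemma (in cc_subgroup_proj) hausd_TN_prefix_embed_solenoid_le:
  assumes p: "\<forall>i. p i > 0" and u: "u \<in> lie_alg" "int_vector N u" and e: "e \<ge> 0"
    and G_line: "\<forall>g\<in>G. \<exists>t. \<forall>n<N. dT (g n) (t * u n) \<le> e"
  shows "hausd_TN G (prefix_embed N u ` solenoid p) \<le> real N * e + (1/2)^N"
proof (rule hausd_TN_le)
  show "G \<noteq> {}" by (rule G_ne)
  show "prefix_embed N u ` solenoid p \<noteq> {}" using sol_line_in_solenoid[OF p] by blast
  show "\<forall>g\<in>G. \<exists>h\<in>prefix_embed N u ` solenoid p. dTN g h \<le> real N * e + (1/2)^N"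
    using G_line sol_line_in_solenoid[OF p] dTN_prefix_embed_sol_line_le[OF u(2)] by blast
  show "\<forall>h\<in>prefix_embed N u ` solenoid p. \<exists>g\<in>G. dTN g h \<le> real N * e + (1/2)^N"
  proof
    fix h assume "h \<in> prefix_embed N u ` solenoid p"
    then obtain s where "h = prefix_embed N u s" by blast
    then obtain g where "g \<in> G" "dTN g h \<le> (1/2)^N" using prefix_embed_near_G[OF u(1)] by blast
    moreover have "(1/2::real)^N \<le> real N * e + (1/2)^N" using e by simp
    ultimately show "\<exists>g\<in>G. dTN g h \<le> real N * e + (1/2)^N" by force
  qed
qed

theorem mainTheorem5:
  fixes p :: "nat \<Rightarrow> nat"
  assumes "\<forall>i. prime (p i)"
    and "\<forall>q::nat. prime q \<longrightarrow> infinite {i. p i = q}"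
  shows "\<forall>G. cc_subgroup G \<longrightarrow>
           (\<forall>\<epsilon>>0. \<exists>H. cc_subgroup H \<and> top_group_iso H (solenoid p) \<and> hausd_TN G H < \<epsilon>)"
proof (intro allI impI)
  fix G :: "(nat \<Rightarrow> real) set" and \<epsilon> :: real
  assume G: "cc_subgroup G" and \<epsilon>: "\<epsilon> > 0"
  \<comment> \<open>Only the positivity of the p i matters.\<close>
  have p: "\<forall>i. p i > 0" using assms(1) prime_gt_0_nat by blast
  obtain N where N: "(1/2::real)^N < \<epsilon>/2" using half_power_less[of "\<epsilon>/2"] \<epsilon>
    by auto
  interpret cc_subgroup_proj G N by unfold_locales (rule G)
  define e where "e = \<epsilon> / (2 * (real N + 1))"
  have "e > 0" and Ne: "real N * e < \<epsilon>/2" using \<epsilon> by (auto simp: e_def field_simps)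
  obtain u where u: "u \<in> lie_alg" "int_vector N u" "\<forall>g\<in>G. \<exists>t. \<forall>n<N. dT (g n) (t * u n) < e"
    using G_near_single_int_line[OF \<open>e > 0\<close>] by blast
  then have "\<forall>g\<in>G. \<exists>t. \<forall>n<N. dT (g n) (t * u n) \<le> e"
    by (meson less_imp_le)
  then have "hausd_TN G (prefix_embed N u ` solenoid p) \<le> real N * e + (1/2)^N"
    using hausd_TN_prefix_embed_solenoid_le[OF p u(1,2)] \<open>e > 0\<close> by simp
  with Ne N have "hausd_TN G (prefix_embed N u ` solenoid p) < \<epsilon>" by linarith
  then show "\<exists>H. cc_subgroup H \<and> top_group_iso H (solenoid p) \<and> hausd_TN G H < \<epsilon>"
    using cc_subgroup_prefix_embed_solenoid[OF p u(2)]
      top_group_iso_prefix_embed_image[OF solenoid_subset_TN u(2)] by blast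
qed

end
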